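(* Let $N\ge1$. For $\alpha\in(-1,1)$ let $\lambda^{(N)}_0(\alpha)<\lambda^{(N)}_1(\alpha)<\dots<\lambda^{(N)}_N(\alpha)$ be the zeros of $\tilde\phi_{N+1}$ (equivalently the eigenvalues of $\tilde{\mathbf M}$). Then: (1) for each $k=0,\dots,N$, $\dfrac{\partial\lambda^{(N)}_k}{\partial\alpha}(\alpha)<0$ for all $\alpha\in(-1,1)$; (2) $\lambda^{(N)}_k<\lambda^{(N-1)}_k<\lambda^{(N)}_{k+1}$ for $k=0,\dots,N-1$ (where $\lambda^{(N-1)}_k$ are the zeros of $\tilde\phi_N$); (3) $\lambda^{(N)}_0<\dfrac{\int_{-1}^1\mu\,\omega\,d\mu}{\int_{-1}^1\omega\,d\mu}<\lambda^{(N)}_N$; in particular $\lambda^{(N)}_0<E_1/E_0<\lambda^{(N)}_N$ for the ansatz moments described below.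
   Context: For a parameter $\alpha\in(-1,1)$ define on $[-1,1]$ the weights $\omega(\mu)=(1+\alpha\mu)^{-4}$ and $\tilde\omega(\mu)=(1+\alpha\mu)^{-5}$. Let $\{\phi_k\}_{k\ge0}$ (resp. $\{\tilde\phi_k\}_{k\ge0}$) be the monic orthogonal polynomials on $[-1,1]$ with respect to $\omega$ (resp. $\tilde\omega$); their coefficients depend smoothly on $\alpha$. Let $\tilde K_{k,k}=\int_{-1}^1\tilde\phi_k^2\tilde\omega\,d\mu$, $\tilde{\boldsymbol\Lambda}=\mathrm{diag}(\tilde K_{0,0},\dots,\tilde K_{N,N})$ and $\tilde{\mathbf M}=\tilde{\boldsymbol\Lambda}^{-1}\mathbf G$ with $G_{i,j}=\int_{-1}^1\mu\,\tilde\phi_i\tilde\phi_j\,\tilde\omega\,d\mu$, $0\le i,j\le N$. The ansatz is $\hat I(\mu)=\sum_{i=0}^N f_i\,\omega(\mu)\phi_i(\mu)$ with $f_0\neq0$ and $f_1=0$, and its moments are $E_k=\int_{-1}^1\mu^k\hat I\,d\mu$; for such an ansatz $E_1/E_0=\int_{-1}^1\mu\,\omega\,d\mu\big/\int_{-1}^1\omega\,d\mu$. *)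

theory Defs
  imports "HOL-Analysis.Analysis" "HOL-Computational_Algebra.Polynomial"
begin

definition om :: "real \<Rightarrow> real \<Rightarrow> real" where
  "om a \<mu> = 1 / (1 + a * \<mu>) ^ 4"

definition omt :: "real \<Rightarrow> real \<Rightarrow> real" where
  "omt a \<mu> = 1 / (1 + a * \<mu>) ^ 5"

definition ipw :: "(real \<Rightarrow> real) \<Rightarrow> real poly \<Rightarrow> real poly \<Rightarrow> real" where
  "ipw w p q = integral {-1..1} (\<lambda>\<mu>. poly p \<mu> * poly q \<mu> * w \<mu>)"

definition mop :: "(real \<Rightarrow> real) \<Rightarrow> nat \<Rightarrow> real poly" where
  "mop w k = (THE p. degree p = k \<and> lead_coeff p = 1 \<and>
                     (\<forall>q. degree q < k \<longrightarrow> ipw w p q = 0))"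

text \<open>lam a n k: the k-th smallest (0-based) real zero of tilde phi_n for parameter a.
  Thus lambda^(N)_k(alpha) = lam alpha (N+1) k.\<close>
definition lam :: "real \<Rightarrow> nat \<Rightarrow> nat \<Rightarrow> real" where
  "lam a n k = sorted_list_of_set {x. poly (mop (omt a) n) x = 0} ! k"

definition ansatz :: "real \<Rightarrow> nat \<Rightarrow> (nat \<Rightarrow> real) \<Rightarrow> real \<Rightarrow> real" where
  "ansatz a N f \<mu> = (\<Sum>i\<le>N. f i * om a \<mu> * poly (mop (om a) i) \<mu>)"

definition moment :: "real \<Rightarrow> nat \<Rightarrow> (nat \<Rightarrow> real) \<Rightarrow> nat \<Rightarrow> real" where
  "moment a N f k = integral {-1..1} (\<lambda>\<mu>. \<mu> ^ k * ansatz a N f \<mu>)"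

end

theory Submission
  imports Defs
begin

(*
  Both weights are positive and continuous on [-1,1], so the three-term recurrence produces
  the monic orthogonal polynomials; their zeros are real, simple, lie in (-1,1) and interlace
  (part 2), and Gauss quadrature at the n zeros of tilde-phi_n is exact up to degree 2n-1
  with positive weights.

  Part 3: as omega = (1 + alpha mu) tilde-omega, the integral of (mu - c) omega is the
  tilde-omega integral of a quadratic, which quadrature evaluates as
  sum_t (t - c)(1 + alpha t) W_t; for c the smallest (largest) zero every term is >= 0 (<= 0).
  For the ansatz, orthogonality leaves only the f_0 term in E_0 and E_1.

  Part 1: the recurrence involves only moments of tilde-omega, so the coefficients of
  tilde-phi_n are differentiable in alpha, and a simple zero x0 moves differentiably with
  x0' = - (d_alpha tilde-phi_n)(x0) / h(x0), where tilde-phi_n = (x - x0) h.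
  Differentiating <tilde-phi_n, h> = 0 and evaluating <d_alpha tilde-phi_n, h> by quadrature
  gives (d_alpha tilde-phi_n)(x0) h(x0) W = - int tilde-phi_n h d_alpha tilde-omega, and
  splitting d_alpha tilde-omega = -5 mu (1 + alpha mu)^-6 into a multiple of tilde-omega plus
  -5 (mu - x0) / ((1 + alpha x0)(1 + alpha mu)^6) shows that the right-hand side is positive,
  hence x0' < 0.
*)

section \<open>Weighted inner products on [-1,1]\<close>

definition pos_weight :: "(real \<Rightarrow> real) \<Rightarrow> bool" where
  "pos_weight w \<longleftrightarrow> continuous_on {-1..1} w \<and> (\<forall>x\<in>{-1..1}. 0 < w x)"

lemma pos_weight_continuous_on: "pos_weight w \<Longrightarrow> continuous_on {-1..1} w"
  unfolding pos_weight_def by simp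

lemma ipw_integrand_integrable:
  fixes w :: "real \<Rightarrow> real"
  assumes "continuous_on {-1..1} w"
  shows "(\<lambda>\<mu>. poly p \<mu> * poly q \<mu> * w \<mu>) integrable_on {-1..1}"
  by (rule integrable_continuous_interval) (intro continuous_intros assms)

lemma ipw_commute: "ipw w p q = ipw w q p"
  unfolding ipw_def by (simp add: mult.commute mult.left_commute)

lemma ipw_0 [simp]: "ipw w 0 q = 0" "ipw w q 0 = 0"
  unfolding ipw_def by simp_all

lemma ipw_add_left:
  assumes "continuous_on {-1..1} w"
  shows "ipw w (p + q) r = ipw w p r + ipw w q r"
proof -
  have "ipw w (p + q) r = integral {-1..1}
          (\<lambda>\<mu>. poly p \<mu> * poly r \<mu> * w \<mu> + poly q \<mu> * poly r \<mu> * w \<mu>)"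
    unfolding ipw_def by (simp add: algebra_simps)
  also have "\<dots> = ipw w p r + ipw w q r"
    unfolding ipw_def by (intro integral_add ipw_integrand_integrable assms)
  finally show ?thesis .
qed

lemma ipw_smult_left: "ipw w (smult c p) q = c * ipw w p q"
proof -
  have "ipw w (smult c p) q = integral {-1..1} (\<lambda>\<mu>. c * (poly p \<mu> * poly q \<mu> * w \<mu>))"
    unfolding ipw_def by (simp add: algebra_simps)
  then show ?thesis unfolding ipw_def by simp
qed

lemma ipw_diff_left:
  assumes "continuous_on {-1..1} w"
  shows "ipw w (p - q) r = ipw w p r - ipw w q r"
  using ipw_add_left[OF assms, of p "-q" r] ipw_smult_left[of w "-1" q r] by simp

lemma ipw_add_right:
  assumes "continuous_on {-1..1} w"
  shows "ipw w r (p + q) = ipw w r p + ipw w r q"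
  using ipw_add_left[OF assms] ipw_commute by metis

lemma ipw_diff_right:
  assumes "continuous_on {-1..1} w"
  shows "ipw w r (p - q) = ipw w r p - ipw w r q"
  using ipw_diff_left[OF assms] ipw_commute by metis

lemma ipw_smult_right: "ipw w q (smult c p) = c * ipw w q p"
  using ipw_smult_left ipw_commute by metis

lemma ipw_sum_left:
  assumes "continuous_on {-1..1} w"
  shows "ipw w (\<Sum>i\<in>A. f i) q = (\<Sum>i\<in>A. ipw w (f i) q)"
  by (induction A rule: infinite_finite_induct) (simp_all add: ipw_add_left[OF assms])

lemma ipw_mult_x: "ipw w (pCons 0 p) q = ipw w p (pCons 0 q)"
  unfolding ipw_def by (simp add: algebra_simps)

lemma ipw_mult_shift: "ipw w (p * q) r = ipw w p (q * r)"
  unfolding ipw_def by (simp add: algebra_simps)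

lemma poly_eq_0_on_interval:
  fixes p :: "real poly"
  assumes "\<And>x. x \<in> {-1..1} \<Longrightarrow> poly p x = 0"
  shows "p = 0"
proof (rule ccontr)
  assume "p \<noteq> 0"
  then have "finite {x. poly p x = 0}" by (rule poly_roots_finite)
  moreover have "{-1..1::real} \<subseteq> {x. poly p x = 0}" using assms by auto
  ultimately have "finite {-1..1::real}" by (rule finite_subset[rotated])
  then show False using infinite_Icc[of "-1::real" 1] by simp
qed

lemma integral_poly_weight_pos:
  assumes w: "pos_weight w" and r: "r \<noteq> 0"
    and nonneg: "\<And>x. x \<in> {-1..1} \<Longrightarrow> poly r x \<ge> 0"
  shows "integral {-1..1} (\<lambda>x. poly r x * w x) > 0"
proof -
  have cont: "continuous_on {-1..1} (\<lambda>x. poly r x * w x)"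
    using w unfolding pos_weight_def by (intro continuous_intros) auto
  have nonneg': "\<And>x. x \<in> {-1..1} \<Longrightarrow> poly r x * w x \<ge> 0"
    using nonneg w unfolding pos_weight_def by (simp add: less_imp_le)
  have "integral {-1..1} (\<lambda>x. poly r x * w x) \<ge> 0"
    by (rule integral_nonneg) (use integrable_continuous_interval[OF cont] nonneg' in auto)
  moreover have "integral {-1..1} (\<lambda>x. poly r x * w x) \<noteq> 0"
  proof
    assume "integral {-1..1} (\<lambda>x. poly r x * w x) = 0"
    then have "\<forall>x\<in>{-1..1}. poly r x * w x = 0"
      using integral_eq_0_iff[OF cont _ nonneg'] by simp
    then have "r = 0"
      using w unfolding pos_weight_def by (force intro: poly_eq_0_on_interval)
    with r show False by simp
  qed
  ultimately show ?thesis by simp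
qed

lemma ipw_self_pos:
  assumes "pos_weight w" "p \<noteq> 0"
  shows "ipw w p p > 0"
proof -
  have "ipw w p p = integral {-1..1} (\<lambda>x. poly (p * p) x * w x)"
    unfolding ipw_def by simp
  also have "\<dots> > 0"
    using assms by (intro integral_poly_weight_pos) auto
  finally show ?thesis .
qed

section \<open>Monic orthogonal polynomials by the three-term recurrence\<close>

definition deg_below :: "real poly \<Rightarrow> nat \<Rightarrow> bool" where
  "deg_below q n \<longleftrightarrow> (\<forall>i\<ge>n. coeff q i = 0)"

lemma deg_below_iff: "deg_below q n \<longleftrightarrow> q = 0 \<or> degree q < n"
  unfolding deg_below_def
  by (metis coeff_0 coeff_eq_0 le_degree leading_coeff_0_iff linorder_not_le order_less_le_trans)

lemma deg_below_0: "deg_below q 0 \<Longrightarrow> q = 0"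
  unfolding deg_below_def by (simp add: poly_eq_iff)

lemma deg_below_mono: "deg_below q n \<Longrightarrow> n \<le> m \<Longrightarrow> deg_below q m"
  unfolding deg_below_def by auto

lemma deg_below_pCons_0: "deg_below q n \<Longrightarrow> deg_below (pCons 0 q) (Suc n)"
  unfolding deg_below_def by (auto simp: coeff_pCons split: nat.splits)

lemma deg_below_diff: "deg_below p n \<Longrightarrow> deg_below q n \<Longrightarrow> deg_below (p - q) n"
  unfolding deg_below_def by auto

lemma deg_below_smult: "deg_below p n \<Longrightarrow> deg_below (smult c p) n"
  unfolding deg_below_def by auto

lemma deg_below_sum: "(\<And>i. i \<in> A \<Longrightarrow> deg_below (f i) n) \<Longrightarrow> deg_below (\<Sum>i\<in>A. f i) n"
  unfolding deg_below_def by (induction A rule: infinite_finite_induct) (auto simp: coeff_sum)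

lemma deg_below_mult:
  assumes "deg_below p (Suc a)" "deg_below q (Suc b)"
  shows "deg_below (p * q) (Suc (a + b))"
proof (cases "p = 0 \<or> q = 0")
  case False
  then have "degree p < Suc a" "degree q < Suc b" using assms deg_below_iff by auto
  then have "degree (p * q) < Suc (a + b)" using degree_mult_le[of p q] by linarith
  then show ?thesis using deg_below_iff by auto
qed (auto simp: deg_below_def)

lemma deg_below_cancel_lead:
  assumes "deg_below q (Suc n)" "deg_below p (Suc n)" "coeff p n = 1"
  shows "deg_below (q - smult (coeff q n) p) n"
  using assms unfolding deg_below_def
proof (intro allI impI)
  fix i assume "\<forall>i\<ge>Suc n. coeff q i = 0" "\<forall>i\<ge>Suc n. coeff p i = 0" "coeff p n = 1" "n \<le> i"
  then show "coeff (q - smult (coeff q n) p) i = 0"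
    by (cases "i = n") auto
qed

fun ortho_poly :: "(real \<Rightarrow> real) \<Rightarrow> nat \<Rightarrow> real poly" where
  "ortho_poly w 0 = 1"
| "ortho_poly w (Suc 0) = pCons 0 1 - smult (ipw w (pCons 0 1) 1 / ipw w 1 1) 1"
| "ortho_poly w (Suc (Suc n)) =
     pCons 0 (ortho_poly w (Suc n))
     - smult (ipw w (pCons 0 (ortho_poly w (Suc n))) (ortho_poly w (Suc n))
              / ipw w (ortho_poly w (Suc n)) (ortho_poly w (Suc n))) (ortho_poly w (Suc n))
     - smult (ipw w (ortho_poly w (Suc n)) (ortho_poly w (Suc n))
              / ipw w (ortho_poly w n) (ortho_poly w n)) (ortho_poly w n)"

declare ortho_poly.simps(2,3) [simp del]

lemma coeff_ortho_poly: "coeff (ortho_poly w n) n = 1 \<and> (\<forall>i>n. coeff (ortho_poly w n) i = 0)"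
  by (induction w n rule: ortho_poly.induct) (auto simp: ortho_poly.simps coeff_pCons split: nat.splits)

lemma deg_below_ortho_poly: "deg_below (ortho_poly w n) (Suc n)"
  using coeff_ortho_poly[of w n] unfolding deg_below_def by auto

lemma degree_ortho_poly [simp]: "degree (ortho_poly w n) = n"
  using coeff_ortho_poly[of w n] by (intro antisym degree_le le_degree) auto

lemma coeff_ortho_poly_self [simp]: "coeff (ortho_poly w n) n = 1"
  using coeff_ortho_poly by blast

lemma lead_coeff_ortho_poly [simp]: "lead_coeff (ortho_poly w n) = 1"
  using coeff_ortho_poly[of w n] by simp

lemma ortho_poly_nonzero [simp]: "ortho_poly w n \<noteq> 0"
  using lead_coeff_ortho_poly[of w n] by (metis leading_coeff_0_iff zero_neq_one)

lemma ortho_poly_orthogonal_1: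
  assumes w: "pos_weight w" and q: "deg_below q (Suc 0)"
  shows "ipw w (ortho_poly w (Suc 0)) q = 0"
proof -
  have c: "continuous_on {-1..1} w" using w by (rule pos_weight_continuous_on)
  have q: "q = smult (coeff q 0) 1"
    using q unfolding deg_below_def by (auto simp: poly_eq_iff coeff_pCons split: nat.splits)
  have "ipw w 1 1 > 0" using ipw_self_pos[OF w, of 1] by simp
  moreover have "ipw w (ortho_poly w (Suc 0)) q
      = coeff q 0 * (ipw w (pCons 0 1) 1 - ipw w (pCons 0 1) 1 / ipw w 1 1 * ipw w 1 1)"
    by (subst q) (simp only: ortho_poly.simps ipw_smult_right ipw_diff_left[OF c] ipw_smult_left)
  ultimately show ?thesis by simp
qed

lemma deg_below_decompose:
  assumes q: "deg_below q (Suc (Suc n))"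
    and P1: "deg_below P1 (Suc (Suc n))" "coeff P1 (Suc n) = 1"
    and P0: "deg_below P0 (Suc n)" "coeff P0 n = 1"
  obtains d e r where "q = smult d P1 + smult e P0 + r" "deg_below r n"
proof -
  define q1 where "q1 = q - smult (coeff q (Suc n)) P1"
  have q1: "deg_below q1 (Suc n)" unfolding q1_def using deg_below_cancel_lead[OF q P1] .
  define r where "r = q1 - smult (coeff q1 n) P0"
  have "deg_below r n" unfolding r_def using deg_below_cancel_lead[OF q1 P0] .
  moreover have "q = smult (coeff q (Suc n)) P1 + smult (coeff q1 n) P0 + r"
    unfolding r_def q1_def by simp
  ultimately show ?thesis using that by blast
qed

lemma ortho_poly_orthogonal_Suc_Suc:
  assumes w: "pos_weight w"
    and orth0: "\<And>q. deg_below q n \<Longrightarrow> ipw w (ortho_poly w n) q = 0"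
    and orth1: "\<And>q. deg_below q (Suc n) \<Longrightarrow> ipw w (ortho_poly w (Suc n)) q = 0"
    and q: "deg_below q (Suc (Suc n))"
  shows "ipw w (ortho_poly w (Suc (Suc n))) q = 0"
proof -
  have c: "continuous_on {-1..1} w" using w by (rule pos_weight_continuous_on)
  define P0 where "P0 = ortho_poly w n"
  define P1 where "P1 = ortho_poly w (Suc n)"
  define \<beta> where "\<beta> = ipw w (pCons 0 P1) P1 / ipw w P1 P1"
  define \<gamma> where "\<gamma> = ipw w P1 P1 / ipw w P0 P0"
  have P2: "ortho_poly w (Suc (Suc n)) = pCons 0 P1 - smult \<beta> P1 - smult \<gamma> P0"
    unfolding P0_def P1_def \<beta>_def \<gamma>_def by (simp add: ortho_poly.simps)
  have pos1: "ipw w P1 P1 > 0" unfolding P1_def by (rule ipw_self_pos[OF w]) simp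
  have pos0: "ipw w P0 P0 > 0" unfolding P0_def by (rule ipw_self_pos[OF w]) simp
  have deg0: "deg_below P0 (Suc n)" "coeff P0 n = 1"
    unfolding P0_def using deg_below_ortho_poly coeff_ortho_poly by blast+
  have deg1: "deg_below P1 (Suc (Suc n))" "coeff P1 (Suc n) = 1"
    unfolding P1_def using deg_below_ortho_poly coeff_ortho_poly by blast+
  have orth_P1_lower: "\<And>q. deg_below q (Suc n) \<Longrightarrow> ipw w P1 q = 0"
    unfolding P1_def by (rule orth1)
  have orth10: "ipw w P1 P0 = 0" using orth_P1_lower[OF deg0(1)] .
  have orth_P1: "ipw w (ortho_poly w (Suc (Suc n))) P1 = 0"
    unfolding P2 using pos1 orth10 ipw_commute[of w P0 P1]
    by (simp add: ipw_diff_left[OF c] ipw_smult_left \<beta>_def)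
  \<comment> \<open>\<open>x P0 - P1\<close> has degree \<open>\<le> n\<close>, so \<open>\<langle>P1, x P0\<rangle> = \<langle>P1, P1\<rangle>\<close>\<close>
  have "deg_below (pCons 0 P0 - smult 1 P1) (Suc n)"
    using deg_below_cancel_lead[OF deg_below_pCons_0[OF deg0(1)] deg1] deg0(2) by simp
  then have xP0: "ipw w P1 (pCons 0 P0) = ipw w P1 P1"
    using orth_P1_lower[of "pCons 0 P0 - smult 1 P1"] by (simp add: ipw_diff_right[OF c])
  have orth_P0: "ipw w (ortho_poly w (Suc (Suc n))) P0 = 0"
    unfolding P2 using pos0 orth10 xP0
    by (simp add: ipw_diff_left[OF c] ipw_smult_left ipw_mult_x \<gamma>_def)
  obtain d e r where qe: "q = smult d P1 + smult e P0 + r" and r: "deg_below r n"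
    using deg_below_decompose[OF q deg1 deg0] .
  have orth_r: "ipw w (ortho_poly w (Suc (Suc n))) r = 0"
    unfolding P2 P0_def P1_def
    using orth1[OF deg_below_pCons_0[OF r]] orth1[OF deg_below_mono[OF r]] orth0[OF r]
    by (simp add: ipw_diff_left[OF c] ipw_smult_left ipw_mult_x)
  show ?thesis
    unfolding qe using orth_P1 orth_P0 orth_r by (simp add: ipw_add_right[OF c] ipw_smult_right)
qed

lemma ortho_poly_orthogonal:
  assumes w: "pos_weight w" and q: "deg_below q n"
  shows "ipw w (ortho_poly w n) q = 0"
proof -
  have "(\<forall>q. deg_below q n \<longrightarrow> ipw w (ortho_poly w n) q = 0) \<and>
        (\<forall>q. deg_below q (Suc n) \<longrightarrow> ipw w (ortho_poly w (Suc n)) q = 0)"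
  proof (induction n)
    case 0
    then show ?case using ortho_poly_orthogonal_1[OF w] by (auto dest: deg_below_0)
  next
    case (Suc n)
    then show ?case using ortho_poly_orthogonal_Suc_Suc[OF w] by blast
  qed
  then show ?thesis using q by blast
qed

lemma mop_eq_ortho_poly:
  assumes w: "pos_weight w"
  shows "mop w n = ortho_poly w n"
  unfolding mop_def
proof (rule the_equality)
  show "degree (ortho_poly w n) = n \<and> lead_coeff (ortho_poly w n) = 1 \<and>
        (\<forall>q. degree q < n \<longrightarrow> ipw w (ortho_poly w n) q = 0)"
    using ortho_poly_orthogonal[OF w] deg_below_iff lead_coeff_ortho_poly[of w n]
      degree_ortho_poly[of w n] by blast
next
  fix p assume p: "degree p = n \<and> lead_coeff p = 1 \<and> (\<forall>q. degree q < n \<longrightarrow> ipw w p q = 0)"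
  have c: "continuous_on {-1..1} w" using w by (rule pos_weight_continuous_on)
  define d where "d = p - ortho_poly w n"
  have "deg_below d n" unfolding deg_below_def d_def
  proof (intro allI impI)
    fix i assume "n \<le> i"
    then show "coeff (p - ortho_poly w n) i = 0"
      using p coeff_ortho_poly[of w n] by (cases "i = n") (auto intro: coeff_eq_0)
  qed
  then have "ipw w p d = 0" "ipw w (ortho_poly w n) d = 0"
    using p ortho_poly_orthogonal[OF w] deg_below_iff by auto
  then have "ipw w d d = 0" unfolding d_def by (simp add: ipw_diff_left[OF c])
  then show "p = ortho_poly w n"
    using ipw_self_pos[OF w, of d] unfolding d_def by fastforce
qed

section \<open>Zeros of the orthogonal polynomials\<close>

definition root_poly :: "real set \<Rightarrow> real poly" where
  "root_poly R = (\<Prod>r\<in>R. [:-r, 1:])"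

lemma poly_root_poly: "poly (root_poly R) x = (\<Prod>r\<in>R. x - r)"
  unfolding root_poly_def by (simp add: poly_prod)

lemma root_poly_monic:
  "finite R \<Longrightarrow> root_poly R \<noteq> 0 \<and> degree (root_poly R) = card R \<and> lead_coeff (root_poly R) = 1"
proof (induction R rule: finite_induct)
  case empty
  then show ?case by (simp add: root_poly_def)
next
  case (insert x F)
  have "root_poly (insert x F) = [:-x,1:] * root_poly F" unfolding root_poly_def using insert by simp
  then show ?case
    using insert degree_mult_eq[of "[:-x,1:]" "root_poly F"] lead_coeff_mult[of "[:-x,1:]" "root_poly F"]
    by (auto simp del: mult_pCons_left)
qed

lemma root_poly_dvd: "finite R \<Longrightarrow> \<forall>r\<in>R. poly p r = 0 \<Longrightarrow> root_poly R dvd p"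
proof (induction R arbitrary: p rule: finite_induct)
  case empty
  then show ?case by (simp add: root_poly_def)
next
  case (insert x F)
  obtain s where s: "p = [:-x,1:] * s"
    using insert.prems poly_eq_0_iff_dvd by (metis dvdE insertI1)
  have "\<forall>r\<in>F. poly s r = 0" using insert s by auto
  then have "root_poly F dvd s" using insert.IH by simp
  moreover have "root_poly (insert x F) = [:-x,1:] * root_poly F"
    unfolding root_poly_def using insert by simp
  ultimately show ?case unfolding s by (metis mult_dvd_mono dvd_refl)
qed

lemma monic_eq_root_poly:
  assumes "finite R" "\<forall>r\<in>R. poly p r = 0" "card R = degree p" "lead_coeff p = 1"
  shows "p = root_poly R"
proof -
  obtain s where s: "p = root_poly R * s" using root_poly_dvd[OF assms(1,2)] by (metis dvdE)
  have R: "root_poly R \<noteq> 0" "degree (root_poly R) = card R" "lead_coeff (root_poly R) = 1"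
    using root_poly_monic[OF assms(1)] by auto
  have "s \<noteq> 0" using s assms(4) by auto
  then have "degree s = 0" using s R assms(3) by (simp add: degree_mult_eq)
  moreover have "lead_coeff s = 1" using assms(4) R unfolding s by (simp add: lead_coeff_mult)
  ultimately have "s = 1" by (metis coeff_pCons_0 degree_0_id one_pCons)
  then show ?thesis using s by simp
qed

lemma prod_diff_sign:
  fixes x :: real
  assumes "finite R" "x \<notin> R"
  shows "(\<Prod>r\<in>R. x - r) \<noteq> 0 \<and> ((\<Prod>r\<in>R. x - r) > 0 \<longleftrightarrow> even (card {r\<in>R. x < r}))"
  using assms
proof (induction R rule: finite_induct)
  case (insert a F)
  have "{r\<in>insert a F. x < r} = (if x < a then insert a {r\<in>F. x < r} else {r\<in>F. x < r})" by auto
  then have card: "card {r\<in>insert a F. x < r}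
      = (if x < a then Suc (card {r\<in>F. x < r}) else card {r\<in>F. x < r})"
    using insert by auto
  have IH: "(\<Prod>r\<in>F. x - r) \<noteq> 0" "(\<Prod>r\<in>F. x - r) > 0 \<longleftrightarrow> even (card {r\<in>F. x < r})"
    using insert by auto
  have "(\<Prod>r\<in>insert a F. x - r) = (x - a) * (\<Prod>r\<in>F. x - r)" using insert by simp
  then show ?case unfolding card using IH insert.prems
    by (cases "x < a") (auto simp: zero_less_mult_iff)
qed simp

lemma root_poly_sign_interlaced:
  fixes xs :: "nat \<Rightarrow> real"
  assumes mono: "strict_mono_on {..<m} xs"
    and below: "\<And>i. i < m \<Longrightarrow> j \<le> i \<Longrightarrow> y < xs i"
    and above: "\<And>i. i < m \<Longrightarrow> i < j \<Longrightarrow> xs i < y"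
  shows "poly (root_poly (xs ` {..<m})) y \<noteq> 0 \<and>
         (poly (root_poly (xs ` {..<m})) y > 0 \<longleftrightarrow> even (m - j))"
proof -
  have inj: "inj_on xs {j..<m}"
    by (rule inj_on_subset[OF strict_mono_on_imp_inj_on[OF mono]]) auto
  have "y \<notin> xs ` {..<m}" using below above by (metis imageE lessThan_iff less_irrefl not_le)
  moreover have "{r \<in> xs ` {..<m}. y < r} = xs ` {j..<m}"
  proof (intro set_eqI iffI)
    fix r assume "r \<in> {r \<in> xs ` {..<m}. y < r}"
    then obtain i where "i < m" "r = xs i" "y < xs i" by auto
    moreover have "j \<le> i" using above[of i] \<open>i < m\<close> \<open>y < xs i\<close> by (meson less_asym not_le)
    ultimately show "r \<in> xs ` {j..<m}" by auto
  qed (use below in auto)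
  moreover have "card (xs ` {j..<m}) = m - j" using card_image[OF inj] by simp
  ultimately show ?thesis unfolding poly_root_poly using prod_diff_sign[of "xs ` {..<m}" y] by simp
qed

lemma poly_roots_eq_image_strict_mono:
  fixes p :: "real poly"
  assumes "p \<noteq> 0" "degree p \<le> n" "strict_mono_on {..<n} z" "\<And>j. j < n \<Longrightarrow> poly p (z j) = 0"
  shows "{x. poly p x = 0} = z ` {..<n}"
proof -
  have fin: "finite {x. poly p x = 0}" using assms(1) by (rule poly_roots_finite)
  have sub: "z ` {..<n} \<subseteq> {x. poly p x = 0}" using assms(4) by auto
  have "card (z ` {..<n}) = n" using card_image[OF strict_mono_on_imp_inj_on[OF assms(3)]] by simp
  moreover have "card {x. poly p x = 0} \<le> n"
    using card_poly_roots_bound[OF assms(1)] assms(2) by simp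
  ultimately show ?thesis using card_subset_eq[OF fin sub] card_mono[OF fin sub] by simp
qed

definition sorted_roots :: "(real \<Rightarrow> real) \<Rightarrow> nat \<Rightarrow> (nat \<Rightarrow> real) \<Rightarrow> bool" where
  "sorted_roots w n y \<longleftrightarrow> strict_mono_on {..<n} y \<and> {x. poly (ortho_poly w n) x = 0} = y ` {..<n}"

lemma sorted_rootsI:
  assumes "strict_mono_on {..<n} z" "\<And>j. j < n \<Longrightarrow> poly (ortho_poly w n) (z j) = 0"
  shows "sorted_roots w n z"
  unfolding sorted_roots_def using poly_roots_eq_image_strict_mono[OF _ _ assms] assms by simp

lemma sorted_roots_root: "sorted_roots w n y \<Longrightarrow> j < n \<Longrightarrow> poly (ortho_poly w n) (y j) = 0"
  unfolding sorted_roots_def by auto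

lemma card_sorted_roots: "sorted_roots w n y \<Longrightarrow> card (y ` {..<n}) = n"
  using card_image[OF strict_mono_on_imp_inj_on[of "{..<n}" y]] unfolding sorted_roots_def by simp

lemma sorted_roots_eq_root_poly:
  assumes "sorted_roots w n y"
  shows "ortho_poly w n = root_poly (y ` {..<n})"
  using assms by (intro monic_eq_root_poly) (auto simp: card_sorted_roots sorted_roots_def)

lemma sorted_list_of_set_image_strict_mono:
  assumes "strict_mono_on {..<n} y"
  shows "sorted_list_of_set (y ` {..<n}) = map y [0..<n]"
proof -
  have inj: "inj_on y {..<n}" using assms by (rule strict_mono_on_imp_inj_on)
  have "sorted_wrt (<) (map y [0..<n])"
    using assms unfolding sorted_wrt_map by (auto simp: sorted_wrt_iff_nth_less strict_mono_on_def)
  moreover have "set (map y [0..<n]) = y ` {..<n}" by auto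
  moreover have "length (map y [0..<n]) = card (y ` {..<n})" using card_image[OF inj] by simp
  ultimately show ?thesis by (intro sorted_list_of_set_unique[THEN iffD1]) auto
qed

lemma monic_poly_ge_1_at_top:
  fixes p :: "real poly"
  assumes "lead_coeff p = 1"
  shows "\<exists>T. \<forall>x\<ge>T. poly p x \<ge> 1"
  using poly_pinfty_gt_lc[of p] assms by simp

lemma monic_poly_sign_at_bot:
  fixes p :: "real poly"
  assumes "lead_coeff p = 1"
  shows "\<exists>T. \<forall>x\<le>T. (-1) ^ degree p * poly p x \<ge> 1"
proof -
  define Q where "Q = smult ((-1) ^ degree p) (pcompose p [:0,-1:])"
  have "lead_coeff (pcompose p [:0,-1:]) = (-1) ^ degree p"
    using lead_coeff_comp[of "[:0,-1::real:]" p] assms by simp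
  then have "lead_coeff Q = 1" unfolding Q_def by (simp add: power_mult_distrib[symmetric])
  then obtain T where T: "\<forall>x\<ge>T. poly Q x \<ge> 1" using monic_poly_ge_1_at_top by blast
  have "(-1) ^ degree p * poly p x \<ge> 1" if "x \<le> -T" for x
    using T[rule_format, of "-x"] that unfolding Q_def by (auto simp: poly_pcompose)
  then show ?thesis by blast
qed

lemma poly_root_between_sign_changes:
  fixes p :: "real poly" and ys :: "nat \<Rightarrow> real"
  assumes monic: "lead_coeff p = 1" "degree p = Suc (Suc m)"
    and mono: "strict_mono_on {..<Suc m} ys"
    and sign: "\<And>j. j < Suc m \<Longrightarrow> poly p (ys j) \<noteq> 0 \<and> (poly p (ys j) < 0 \<longleftrightarrow> even (m - j))"
    and j: "j \<le> Suc m"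
  shows "\<exists>r. poly p r = 0 \<and> (0 < j \<longrightarrow> ys (j - 1) < r) \<and> (j < Suc m \<longrightarrow> r < ys j)"
proof -
  consider "j = 0" | i where "j = Suc i" "i < m" | "j = Suc m"
    using j by (metis Suc_le_lessD less_Suc_eq not0_implies_Suc)
  then show ?thesis
  proof cases
    case 1
    obtain T where T: "\<forall>x\<le>T. (-1) ^ m * poly p x \<ge> 1"
      using monic_poly_sign_at_bot[OF monic(1)] monic(2) by auto
    define t where "t = min T (ys 0 - 1)"
    have t: "t < ys 0" "(-1) ^ m * poly p t \<ge> 1" using T unfolding t_def by auto
    have "poly p t * poly p (ys 0) < 0"
      using t sign[of 0] by (cases "even m") (auto simp: mult_pos_neg mult_neg_pos)
    then obtain r where "t < r" "r < ys 0" "poly p r = 0" using poly_IVT[OF t(1)] by blast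
    then show ?thesis using 1 by auto
  next
    case (2 i)
    have "ys i < ys (Suc i)" using mono \<open>i < m\<close> by (auto simp: strict_mono_on_def)
    moreover have "poly p (ys i) * poly p (ys (Suc i)) < 0"
      using sign[of i] sign[of "Suc i"] \<open>i < m\<close>
      by (cases "even (m - i)") (auto simp: mult_less_0_iff Suc_diff_Suc)
    ultimately obtain r where "ys i < r" "r < ys (Suc i)" "poly p r = 0" using poly_IVT by blast
    then show ?thesis using 2 by auto
  next
    case 3
    obtain T where T: "\<forall>x\<ge>T. poly p x \<ge> 1" using monic_poly_ge_1_at_top[OF monic(1)] by blast
    define t where "t = max T (ys m + 1)"
    have t: "ys m < t" "poly p t \<ge> 1" using T unfolding t_def by auto
    then have "poly p (ys m) * poly p t < 0" using sign[of m] by (simp add: mult_neg_pos)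
    then obtain r where "ys m < r" "r < t" "poly p r = 0" using poly_IVT[OF t(1)] by blast
    then show ?thesis using 3 by auto
  qed
qed

lemma poly_roots_between_sign_changes:
  fixes p :: "real poly" and ys :: "nat \<Rightarrow> real"
  assumes monic: "lead_coeff p = 1" "degree p = Suc (Suc m)"
    and mono: "strict_mono_on {..<Suc m} ys"
    and sign: "\<And>j. j < Suc m \<Longrightarrow> poly p (ys j) \<noteq> 0 \<and> (poly p (ys j) < 0 \<longleftrightarrow> even (m - j))"
  obtains zs where "strict_mono_on {..<Suc (Suc m)} zs" "\<And>j. j < Suc (Suc m) \<Longrightarrow> poly p (zs j) = 0"
    "\<And>k. k < Suc m \<Longrightarrow> zs k < ys k \<and> ys k < zs (Suc k)"
proof -
  have ys_le: "\<And>i j. i \<le> j \<Longrightarrow> j < Suc m \<Longrightarrow> ys i \<le> ys j"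
    using mono unfolding strict_mono_on_def by (metis le_less lessThan_iff order.strict_trans1)
  have "\<forall>j\<in>{..Suc m}. \<exists>r. poly p r = 0 \<and> (0 < j \<longrightarrow> ys (j - 1) < r) \<and> (j < Suc m \<longrightarrow> r < ys j)"
    using poly_root_between_sign_changes[OF monic mono sign] by simp
  then obtain zs where "\<forall>j\<in>{..Suc m}.
      poly p (zs j) = 0 \<and> (0 < j \<longrightarrow> ys (j - 1) < zs j) \<and> (j < Suc m \<longrightarrow> zs j < ys j)"
    by (metis bchoice)
  then have zs: "\<And>j. j \<le> Suc m \<Longrightarrow>
      poly p (zs j) = 0 \<and> (0 < j \<longrightarrow> ys (j - 1) < zs j) \<and> (j < Suc m \<longrightarrow> zs j < ys j)"
    by simp
  have "strict_mono_on {..<Suc (Suc m)} zs"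
  proof (rule strict_mono_onI)
    fix i j assume "i \<in> {..<Suc (Suc m)}" "j \<in> {..<Suc (Suc m)}" "i < j"
    then have "zs i < ys i" "ys i \<le> ys (j - 1)" "ys (j - 1) < zs j"
      using zs[of i] zs[of j] ys_le[of i "j - 1"] by auto
    then show "zs i < zs j" by simp
  qed
  moreover have "zs k < ys k \<and> ys k < zs (Suc k)" if "k < Suc m" for k
    using zs[of k] zs[of "Suc k"] that by simp
  ultimately show ?thesis using that zs by (simp add: less_Suc_eq_le)
qed

lemma ortho_poly_Suc_Suc_at_root:
  assumes "poly (ortho_poly w (Suc m)) y = 0"
  shows "poly (ortho_poly w (Suc (Suc m))) y =
    - (ipw w (ortho_poly w (Suc m)) (ortho_poly w (Suc m)) / ipw w (ortho_poly w m) (ortho_poly w m))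
      * poly (ortho_poly w m) y"
  using assms by (simp add: ortho_poly.simps)

lemma ortho_poly_roots_interlace_Suc:
  assumes w: "pos_weight w"
    and xs: "sorted_roots w m xs" and ys: "sorted_roots w (Suc m) ys"
    and interlace: "\<forall>k<m. ys k < xs k \<and> xs k < ys (Suc k)"
  obtains zs where "sorted_roots w (Suc (Suc m)) zs" "\<forall>k<Suc m. zs k < ys k \<and> ys k < zs (Suc k)"
proof -
  define P2 where "P2 = ortho_poly w (Suc (Suc m))"
  have xs_mono: "strict_mono_on {..<m} xs" and ys_mono: "strict_mono_on {..<Suc m} ys"
    using xs ys unfolding sorted_roots_def by auto
  define \<gamma> where "\<gamma> = ipw w (ortho_poly w (Suc m)) (ortho_poly w (Suc m)) / ipw w (ortho_poly w m) (ortho_poly w m)"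
  have \<gamma>: "\<gamma> > 0" unfolding \<gamma>_def using ipw_self_pos[OF w] by simp
  have sign: "poly P2 (ys j) \<noteq> 0 \<and> (poly P2 (ys j) < 0 \<longleftrightarrow> even (m - j))" if j: "j < Suc m" for j
  proof -
    have "ys j < xs i" if "i < m" "j \<le> i" for i
      using interlace that strict_mono_onD[OF ys_mono, of j i] by (cases "j = i") auto
    moreover have "xs i < ys j" if "i < m" "i < j" for i
    proof -
      have "ys (Suc i) \<le> ys j"
        using strict_mono_onD[OF ys_mono, of "Suc i" j] that j by (cases "Suc i = j") auto
      then show ?thesis using interlace that(1) by force
    qed
    ultimately have "poly (ortho_poly w m) (ys j) \<noteq> 0 \<and> (poly (ortho_poly w m) (ys j) > 0 \<longleftrightarrow> even (m - j))"
      unfolding sorted_roots_eq_root_poly[OF xs] by (rule root_poly_sign_interlaced[OF xs_mono])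
    moreover have "poly P2 (ys j) = - \<gamma> * poly (ortho_poly w m) (ys j)"
      unfolding P2_def \<gamma>_def by (rule ortho_poly_Suc_Suc_at_root[OF sorted_roots_root[OF ys j]])
    ultimately show ?thesis using \<gamma> by (auto simp: mult_less_0_iff zero_less_mult_iff)
  qed
  obtain zs where "strict_mono_on {..<Suc (Suc m)} zs" "\<And>j. j < Suc (Suc m) \<Longrightarrow> poly P2 (zs j) = 0"
    "\<And>k. k < Suc m \<Longrightarrow> zs k < ys k \<and> ys k < zs (Suc k)"
    using poly_roots_between_sign_changes[of P2 m ys] ys_mono sign unfolding P2_def by auto
  then show ?thesis using that sorted_rootsI[of "Suc (Suc m)" zs w] unfolding P2_def by blast
qed

lemma ortho_poly_sorted_roots:
  assumes w: "pos_weight w"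
  shows "\<exists>xs ys. sorted_roots w n xs \<and> sorted_roots w (Suc n) ys \<and> (\<forall>k<n. ys k < xs k \<and> xs k < ys (Suc k))"
proof (induction n)
  case 0
  define \<beta> where "\<beta> = ipw w (pCons 0 1) 1 / ipw w 1 1"
  have "\<And>x. poly (ortho_poly w (Suc 0)) x = x - \<beta>" unfolding \<beta>_def by (simp add: ortho_poly.simps)
  then have "sorted_roots w (Suc 0) (\<lambda>_. \<beta>)" unfolding sorted_roots_def by (auto simp: strict_mono_on_def)
  moreover have "sorted_roots w 0 (\<lambda>_. 0)" unfolding sorted_roots_def by simp
  ultimately show ?case by blast
next
  case (Suc n)
  then show ?case using ortho_poly_roots_interlace_Suc[OF w] by metis
qed

lemma ortho_poly_root_in_interval:
  assumes w: "pos_weight w" and r: "poly (ortho_poly w n) r = 0"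
  shows "-1 < r \<and> r < 1"
proof (rule ccontr)
  assume out: "\<not> (-1 < r \<and> r < 1)"
  obtain Q where Q: "ortho_poly w n = [:-r,1:] * Q" using r poly_eq_0_iff_dvd by (metis dvdE)
  have "Q \<noteq> 0" using Q ortho_poly_nonzero[of w n] by auto
  have "degree (ortho_poly w n) = 1 + degree Q" unfolding Q using \<open>Q \<noteq> 0\<close> by (subst degree_mult_eq) auto
  then have "deg_below Q n" using deg_below_iff by auto
  \<comment> \<open>\<open>(x - r) Q\<^sup>2\<close> has constant sign on [-1,1], yet its integral is \<open>\<langle>\<phi>\<^sub>n, Q\<rangle> = 0\<close>\<close>
  define s :: real where "s = (if r \<le> -1 then 1 else -1)"
  define R where "R = smult s ([:-r,1:] * Q * Q)"
  have "R \<noteq> 0" unfolding R_def s_def using \<open>Q \<noteq> 0\<close> by (simp del: mult_pCons_left)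
  moreover have "poly R x \<ge> 0" if "x \<in> {-1..1}" for x
  proof -
    have "poly R x = (if r \<le> -1 then x - r else r - x) * (poly Q x * poly Q x)"
      unfolding R_def s_def by (simp add: algebra_simps)
    then show ?thesis using out that by auto
  qed
  ultimately have "integral {-1..1} (\<lambda>x. poly R x * w x) > 0" by (rule integral_poly_weight_pos[OF w])
  moreover have "(\<lambda>x. poly R x * w x) = (\<lambda>x. s * (poly (ortho_poly w n) x * poly Q x * w x))"
    unfolding R_def Q by (auto simp: algebra_simps)
  then have "integral {-1..1} (\<lambda>x. poly R x * w x) = s * ipw w (ortho_poly w n) Q"
    unfolding ipw_def by simp
  ultimately show False using ortho_poly_orthogonal[OF w \<open>deg_below Q n\<close>] by simp
qed

section \<open>Gauss quadrature\<close>

lemma root_poly_remove: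
  assumes "finite R" "r \<in> R"
  shows "root_poly R = [:-r,1:] * root_poly (R - {r})"
  unfolding root_poly_def by (rule prod.remove[OF assms])

lemma poly_root_poly_remove_eq_0_iff:
  assumes "finite R"
  shows "poly (root_poly (R - {r})) x = 0 \<longleftrightarrow> x \<in> R - {r}"
  unfolding poly_root_poly using assms by auto

lemma deg_below_root_poly_remove:
  assumes "finite R" "r \<in> R"
  shows "deg_below (root_poly (R - {r})) (card R)"
proof -
  have "degree (root_poly (R - {r})) = card R - 1" using root_poly_monic[of "R - {r}"] assms by simp
  moreover have "card R \<ge> 1" using assms by (auto simp: card_gt_0_iff Suc_le_eq)
  ultimately show ?thesis using deg_below_iff by auto
qed

definition lagrange_basis :: "real set \<Rightarrow> real \<Rightarrow> real poly" where
  "lagrange_basis R r = smult (1 / poly (root_poly (R - {r})) r) (root_poly (R - {r}))"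

lemma poly_lagrange_basis:
  assumes "finite R" "r \<in> R" "s \<in> R"
  shows "poly (lagrange_basis R r) s = (if s = r then 1 else 0)"
  unfolding lagrange_basis_def using poly_root_poly_remove_eq_0_iff[OF assms(1)] assms by auto

lemma deg_below_lagrange_basis: "finite R \<Longrightarrow> r \<in> R \<Longrightarrow> deg_below (lagrange_basis R r) (card R)"
  unfolding lagrange_basis_def by (intro deg_below_smult deg_below_root_poly_remove)

lemma lagrange_basis_nonzero: "finite R \<Longrightarrow> r \<in> R \<Longrightarrow> lagrange_basis R r \<noteq> 0"
  using poly_lagrange_basis[of R r r] by auto

lemma lagrange_interpolation:
  assumes R: "finite R" and s: "deg_below s (card R)"
  shows "s = (\<Sum>r\<in>R. smult (poly s r) (lagrange_basis R r))"
proof (rule ccontr)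
  define d where "d = s - (\<Sum>r\<in>R. smult (poly s r) (lagrange_basis R r))"
  assume "\<not> ?thesis"
  then have "d \<noteq> 0" unfolding d_def by simp
  have "deg_below d (card R)" unfolding d_def
    by (intro deg_below_diff s deg_below_sum deg_below_smult deg_below_lagrange_basis[OF R])
  then have deg: "degree d < card R" using \<open>d \<noteq> 0\<close> deg_below_iff by auto
  have "poly d t = 0" if t: "t \<in> R" for t
  proof -
    have "(\<Sum>r\<in>R. poly s r * poly (lagrange_basis R r) t) = (\<Sum>r\<in>R. if r = t then poly s r else 0)"
      using poly_lagrange_basis[OF R _ t] by (intro sum.cong) auto
    then show ?thesis unfolding d_def using t R by (simp add: poly_sum)
  qed
  then have "card R \<le> card {x. poly d x = 0}"
    using poly_roots_finite[OF \<open>d \<noteq> 0\<close>] by (intro card_mono) auto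
  also have "\<dots> \<le> degree d" by (rule card_poly_roots_bound[OF \<open>d \<noteq> 0\<close>])
  finally show False using deg by simp
qed

lemma deg_below_div:
  fixes f P :: "real poly"
  assumes P: "P \<noteq> 0" and f: "deg_below f (degree P + n)"
  shows "deg_below (f div P) n"
proof (cases "f div P = 0")
  case False
  have f_eq: "f = P * (f div P) + f mod P" by (simp add: mult.commute)
  have deg: "degree (P * (f div P)) = degree P + degree (f div P)"
    using P False by (simp add: degree_mult_eq)
  have "degree f = degree (P * (f div P))"
  proof (cases "f mod P = 0")
    case False
    then have "degree (f mod P) < degree (P * (f div P))" using degree_mod_less[OF P, of f] deg by simp
    then show ?thesis by (subst f_eq) (rule degree_add_eq_left)
  qed (subst f_eq, simp)
  then have "degree f = degree P + degree (f div P)" using deg by simp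
  moreover have "f \<noteq> 0" using False by auto
  ultimately show ?thesis using f deg_below_iff by auto
qed (simp add: deg_below_def)

definition gauss_weight :: "(real \<Rightarrow> real) \<Rightarrow> real set \<Rightarrow> real \<Rightarrow> real" where
  "gauss_weight w R r = ipw w (lagrange_basis R r) 1"

lemma gauss_quadrature:
  assumes w: "pos_weight w" and y: "sorted_roots w n y" and f: "deg_below f (2 * n)"
  shows "ipw w f 1 = (\<Sum>r\<in>y ` {..<n}. poly f r * gauss_weight w (y ` {..<n}) r)"
proof -
  have c: "continuous_on {-1..1} w" using w by (rule pos_weight_continuous_on)
  define R where "R = y ` {..<n}"
  have R: "finite R" "card R = n" unfolding R_def using card_sorted_roots[OF y] by simp_all
  define P where "P = ortho_poly w n"
  have P_root: "poly P r = 0" if "r \<in> R" for r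
    using that unfolding P_def R_def sorted_roots_eq_root_poly[OF y] poly_root_poly by auto
  define q where "q = f div P"
  define s where "s = f mod P"
  have f_eq: "f = P * q + s" unfolding q_def s_def by (simp add: mult.commute)
  \<comment> \<open>\<open>\<langle>P, q\<rangle> = 0\<close> because \<open>q\<close> has degree \<open>< n\<close>; \<open>s\<close> is reproduced by interpolation at the zeros\<close>
  have "deg_below q n" unfolding q_def P_def using f by (intro deg_below_div) (auto simp: mult_2)
  then have q_part: "ipw w (P * q) 1 = 0"
    unfolding ipw_mult_shift P_def using ortho_poly_orthogonal[OF w] by simp
  have "deg_below s (card R)"
    unfolding s_def P_def deg_below_iff using degree_mod_less[of "ortho_poly w n" f] R by auto
  then have "s = (\<Sum>r\<in>R. smult (poly s r) (lagrange_basis R r))" by (rule lagrange_interpolation[OF R(1)])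
  then have "ipw w s 1 = ipw w (\<Sum>r\<in>R. smult (poly s r) (lagrange_basis R r)) 1" by (rule arg_cong)
  also have "\<dots> = (\<Sum>r\<in>R. poly s r * gauss_weight w R r)"
    unfolding gauss_weight_def by (simp add: ipw_sum_left[OF c] ipw_smult_left)
  also have "\<dots> = (\<Sum>r\<in>R. poly f r * gauss_weight w R r)"
    by (intro sum.cong refl) (simp add: f_eq P_root)
  finally show ?thesis unfolding f_eq R_def using q_part by (simp add: ipw_add_left[OF c])
qed

lemma gauss_weight_pos:
  assumes w: "pos_weight w" and y: "sorted_roots w n y" and r: "r \<in> y ` {..<n}"
  shows "gauss_weight w (y ` {..<n}) r > 0"
proof -
  have c: "continuous_on {-1..1} w" using w by (rule pos_weight_continuous_on)
  define R where "R = y ` {..<n}"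
  have R: "finite R" "card R = n" "r \<in> R" unfolding R_def using card_sorted_roots[OF y] r by simp_all
  define L where "L = lagrange_basis R r"
  obtain k where k: "n = Suc k" using r by (metis emptyE image_empty lessThan_0 not0_implies_Suc)
  have L: "deg_below L (Suc k)" unfolding L_def using deg_below_lagrange_basis[OF R(1,3)] R(2) k by simp
  \<comment> \<open>quadrature is exact for \<open>L\<^sup>2 - L\<close>, which vanishes at every node\<close>
  have "deg_below (L * L - L) (2 * n)"
    using deg_below_mono[OF deg_below_mult[OF L L]] deg_below_mono[OF L] k
    by (intro deg_below_diff) auto
  from gauss_quadrature[OF w y this]
  have "ipw w (L * L - L) 1 = (\<Sum>t\<in>R. poly (L * L - L) t * gauss_weight w R t)" unfolding R_def by simp
  also have "\<dots> = 0" using poly_lagrange_basis[OF R(1,3)] unfolding L_def by (intro sum.neutral) auto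
  finally have "ipw w L L = ipw w L 1" using ipw_mult_shift[of w L L 1] by (simp add: ipw_diff_left[OF c])
  moreover have "ipw w L L > 0" using ipw_self_pos[OF w] lagrange_basis_nonzero[OF R(1,3)] unfolding L_def by simp
  ultimately show ?thesis unfolding gauss_weight_def L_def R_def by simp
qed

section \<open>Interlacing and the weighted mean of \<open>\<mu>\<close>\<close>

lemma one_plus_mult_pos:
  fixes a x :: real
  assumes "a \<in> {-1<..<1}" "x \<in> {-1..1}"
  shows "1 + a * x > 0"
proof -
  have "\<bar>a * x\<bar> = \<bar>a\<bar> * \<bar>x\<bar>" by (simp add: abs_mult)
  also have "\<dots> \<le> \<bar>a\<bar>" using assms by (intro mult_left_le) auto
  also have "\<dots> < 1" using assms by auto
  finally show ?thesis by linarith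
qed

lemma pos_weight_inverse_power: "a \<in> {-1<..<1} \<Longrightarrow> pos_weight (\<lambda>x. 1 / (1 + a * x) ^ k)"
  unfolding pos_weight_def using one_plus_mult_pos[of a]
  by (auto intro!: continuous_intros simp: less_imp_neq[symmetric])

lemma pos_weight_omt: "a \<in> {-1<..<1} \<Longrightarrow> pos_weight (omt a)"
  unfolding omt_def[abs_def] by (rule pos_weight_inverse_power)

lemma pos_weight_om: "a \<in> {-1<..<1} \<Longrightarrow> pos_weight (om a)"
  unfolding om_def[abs_def] by (rule pos_weight_inverse_power)

lemma om_eq_mult_omt:
  assumes "a \<in> {-1<..<1}" "x \<in> {-1..1}"
  shows "om a x = (1 + a * x) * omt a x"
  using one_plus_mult_pos[OF assms] unfolding om_def omt_def by (simp add: eval_nat_numeral)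

lemma lam_sorted_roots:
  assumes a: "a \<in> {-1<..<1}" and y: "sorted_roots (omt a) n y" and k: "k < n"
  shows "lam a n k = y k"
proof -
  have "lam a n k = sorted_list_of_set (y ` {..<n}) ! k"
    unfolding lam_def mop_eq_ortho_poly[OF pos_weight_omt[OF a]] using y sorted_roots_def by simp
  also have "\<dots> = y k"
    using sorted_list_of_set_image_strict_mono[of n y] y k unfolding sorted_roots_def by simp
  finally show ?thesis .
qed

lemma lam_interlace:
  assumes a: "a \<in> {-1<..<1}" and k: "k < N"
  shows "lam a (N+1) k < lam a N k \<and> lam a N k < lam a (N+1) (k+1)"
proof -
  obtain xs ys where r: "sorted_roots (omt a) N xs" "sorted_roots (omt a) (Suc N) ys"
    "\<forall>k<N. ys k < xs k \<and> xs k < ys (Suc k)"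
    using ortho_poly_sorted_roots[OF pos_weight_omt[OF a]] by blast
  then show ?thesis using k lam_sorted_roots[OF a r(1)] lam_sorted_roots[OF a r(2)] by simp
qed

lemma integral_om_pos: "a \<in> {-1<..<1} \<Longrightarrow> integral {-1..1} (om a) > 0"
  using integral_poly_weight_pos[OF pos_weight_om, of a 1] by simp

lemma integral_mean_om_quadrature:
  assumes a: "a \<in> {-1<..<1}" and y: "sorted_roots (omt a) n y" and n: "n \<ge> 2"
  shows "integral {-1..1} (\<lambda>\<mu>. \<mu> * om a \<mu>) - c * integral {-1..1} (om a)
       = (\<Sum>t\<in>y ` {..<n}. (t - c) * (1 + a * t) * gauss_weight (omt a) (y ` {..<n}) t)"
proof -
  have c: "continuous_on {-1..1} (omt a)" using pos_weight_omt[OF a] by (rule pos_weight_continuous_on)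
  have "(\<lambda>\<mu>. \<mu> * om a \<mu> - c * om a \<mu>) integrable_on {-1..1}"
    using pos_weight_continuous_on[OF pos_weight_om[OF a]]
    by (intro integrable_continuous_interval continuous_intros)
  then have "integral {-1..1} (\<lambda>\<mu>. \<mu> * om a \<mu>) - c * integral {-1..1} (om a)
      = integral {-1..1} (\<lambda>\<mu>. \<mu> * om a \<mu> - c * om a \<mu>)"
    using pos_weight_continuous_on[OF pos_weight_om[OF a]]
    by (subst integral_diff) (auto intro!: integrable_continuous_interval continuous_intros)
  also have "\<dots> = ipw (omt a) ([:-c, 1:] * [:1, a:]) 1"
    unfolding ipw_def by (intro integral_cong) (simp add: om_eq_mult_omt[OF a] algebra_simps)
  also have "\<dots> = (\<Sum>t\<in>y ` {..<n}. poly ([:-c, 1:] * [:1, a:]) t * gauss_weight (omt a) (y ` {..<n}) t)"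
  proof (rule gauss_quadrature[OF pos_weight_omt[OF a] y])
    have "deg_below ([:-c, 1:] * [:1, a:]) (Suc (1 + 1))"
      by (intro deg_below_mult) (auto simp: deg_below_def coeff_pCons split: nat.splits)
    then show "deg_below ([:-c, 1:] * [:1, a:]) (2 * n)" by (rule deg_below_mono) (use n in simp)
  qed
  finally show ?thesis by (simp add: algebra_simps)
qed

lemma lam_bounds_weighted_mean:
  assumes a: "a \<in> {-1<..<1}" and N: "N \<ge> 1"
  shows "lam a (N+1) 0 < integral {-1..1} (\<lambda>\<mu>. \<mu> * om a \<mu>) / integral {-1..1} (om a)
       \<and> integral {-1..1} (\<lambda>\<mu>. \<mu> * om a \<mu>) / integral {-1..1} (om a) < lam a (N+1) N"
proof -
  obtain xs ys where y: "sorted_roots (omt a) (Suc N) ys"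
    using ortho_poly_sorted_roots[OF pos_weight_omt[OF a], of N] by blast
  define R where "R = ys ` {..<Suc N}"
  define A where "A = integral {-1..1} (\<lambda>\<mu>. \<mu> * om a \<mu>)"
  define B where "B = integral {-1..1} (om a)"
  define W where "W = gauss_weight (omt a) R"
  have mono: "strict_mono_on {..<Suc N} ys" using y sorted_roots_def by auto
  have ends: "ys 0 \<in> R" "ys N \<in> R" "ys 0 < ys N" unfolding R_def using strict_mono_onD[OF mono] N by auto
  have range: "ys 0 \<le> t \<and> t \<le> ys N" if "t \<in> R" for t
    using that strict_mono_onD[OF mono] unfolding R_def
    by (auto simp: le_less) (metis less_Suc_eq not_less_eq lessThan_iff)
  have pos: "1 + a * t > 0 \<and> W t > 0" if "t \<in> R" for t
    using that ortho_poly_root_in_interval[OF pos_weight_omt[OF a] sorted_roots_root[OF y]]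
      one_plus_mult_pos[OF a] gauss_weight_pos[OF pos_weight_omt[OF a] y]
    unfolding R_def W_def by fastforce
  have quad: "A - c * B = (\<Sum>t\<in>R. (t - c) * (1 + a * t) * W t)" for c
    unfolding A_def B_def R_def W_def using integral_mean_om_quadrature[OF a y] N by simp
  \<comment> \<open>for \<open>c\<close> an extreme node every term has the same sign, and the other extreme node contributes strictly\<close>
  have "finite R" unfolding R_def by simp
  have "0 < (\<Sum>t\<in>R. (t - ys 0) * (1 + a * t) * W t)"
  proof (rule sum_pos2[OF \<open>finite R\<close> ends(2)])
    show "0 < (ys N - ys 0) * (1 + a * ys N) * W (ys N)" using ends pos by simp
    show "0 \<le> (t - ys 0) * (1 + a * t) * W t" if "t \<in> R" for t
      using range[OF that] pos[OF that] by (simp add: less_imp_le)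
  qed
  then have lower: "ys 0 * B < A" using quad[of "ys 0"] by simp
  have "0 < (\<Sum>t\<in>R. (ys N - t) * (1 + a * t) * W t)"
  proof (rule sum_pos2[OF \<open>finite R\<close> ends(1)])
    show "0 < (ys N - ys 0) * (1 + a * ys 0) * W (ys 0)" using ends pos by simp
    show "0 \<le> (ys N - t) * (1 + a * t) * W t" if "t \<in> R" for t
      using range[OF that] pos[OF that] by (simp add: less_imp_le)
  qed
  moreover have "A - ys N * B = - (\<Sum>t\<in>R. (ys N - t) * (1 + a * t) * W t)"
    unfolding quad sum_negf[symmetric] by (intro sum.cong) (simp_all add: algebra_simps)
  ultimately have upper: "A < ys N * B" by simp
  have "B > 0" unfolding B_def by (rule integral_om_pos[OF a])
  moreover have "lam a (N+1) 0 = ys 0" "lam a (N+1) N = ys N" using lam_sorted_roots[OF a y] by auto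
  ultimately show ?thesis using lower upper unfolding A_def B_def by (simp add: field_simps)
qed

lemma moment_eq_sum_ipw:
  assumes a: "a \<in> {-1<..<1}"
  shows "moment a N f k = (\<Sum>i\<le>N. f i * ipw (om a) (ortho_poly (om a) i) (monom 1 k))"
proof -
  have w: "pos_weight (om a)" by (rule pos_weight_om[OF a])
  have c: "continuous_on {-1..1} (om a)" using w by (rule pos_weight_continuous_on)
  have "moment a N f k = integral {-1..1}
      (\<lambda>\<mu>. \<Sum>i\<le>N. f i * (poly (ortho_poly (om a) i) \<mu> * poly (monom 1 k) \<mu> * om a \<mu>))"
    unfolding moment_def ansatz_def mop_eq_ortho_poly[OF w]
    by (simp add: sum_distrib_left poly_monom algebra_simps)
  also have "\<dots> = (\<Sum>i\<le>N. integral {-1..1}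
      (\<lambda>\<mu>. f i * (poly (ortho_poly (om a) i) \<mu> * poly (monom 1 k) \<mu> * om a \<mu>)))"
    by (rule integral_sum) (simp, rule integrable_continuous_interval, intro continuous_intros c)
  finally show ?thesis unfolding ipw_def by simp
qed

lemma moment_eq_first_term:
  assumes a: "a \<in> {-1<..<1}" and f: "\<And>i. 1 \<le> i \<Longrightarrow> i \<le> k \<Longrightarrow> f i = 0"
  shows "moment a N f k = f 0 * integral {-1..1} (\<lambda>\<mu>. \<mu> ^ k * om a \<mu>)"
proof -
  have "f i * ipw (om a) (ortho_poly (om a) i) (monom 1 k) = 0" if "i \<noteq> 0" for i
  proof (cases "i \<le> k")
    case False
    then have "deg_below (monom 1 k) i" by (auto simp: deg_below_def coeff_monom)
    then show ?thesis using ortho_poly_orthogonal[OF pos_weight_om[OF a]] by simp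
  qed (use f that in simp)
  then have "moment a N f k = f 0 * ipw (om a) (ortho_poly (om a) 0) (monom 1 k)"
    unfolding moment_eq_sum_ipw[OF a] by (subst sum.mono_neutral_right[of "{..N}" "{0}"]) auto
  then show ?thesis unfolding ipw_def by (simp add: poly_monom mult.commute)
qed

lemma moment_ratio_eq_weighted_mean:
  assumes a: "a \<in> {-1<..<1}" and f: "f 0 \<noteq> 0" "f 1 = 0"
  shows "moment a N f 1 / moment a N f 0 = integral {-1..1} (\<lambda>\<mu>. \<mu> * om a \<mu>) / integral {-1..1} (om a)"
proof -
  have "moment a N f 0 = f 0 * integral {-1..1} (om a)"
    using moment_eq_first_term[OF a, of 0 f N] by simp
  moreover have "moment a N f 1 = f 0 * integral {-1..1} (\<lambda>\<mu>. \<mu> * om a \<mu>)"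
    using moment_eq_first_term[OF a, of 1 f N] f by (simp add: le_antisym)
  ultimately show ?thesis using f by simp
qed

section \<open>Differentiability in \<open>\<alpha>\<close>\<close>

definition omt_dalpha :: "real \<Rightarrow> real \<Rightarrow> real" where
  "omt_dalpha b x = -5 * x / (1 + b * x) ^ 6"

lemma omt_has_derivative_alpha:
  fixes b t :: real
  assumes "1 + b * t \<noteq> 0"
  shows "((\<lambda>b. omt b t) has_real_derivative omt_dalpha b t) (at b within S)"
proof -
  define u where "u = 1 + b * t"
  have u: "u \<noteq> 0" using assms u_def by simp
  have "((\<lambda>b. 1 / (1 + b * t) ^ 5) has_real_derivative - (5 * u ^ 4 * t) / (u ^ 5) ^ 2) (at b within S)"
    using assms unfolding u_def by (auto intro!: derivative_eq_intros)
  moreover have "(u ^ 5) ^ 2 = u ^ 4 * u ^ 6" by (simp add: power_add[symmetric] power_mult[symmetric])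
  then have "- (5 * u ^ 4 * t) / (u ^ 5) ^ 2 = omt_dalpha b t"
    using u unfolding omt_dalpha_def u_def[symmetric] by (simp add: field_simps)
  ultimately show ?thesis unfolding omt_def by simp
qed

lemma continuous_on_omt_dalpha: "a \<in> {-1<..<1} \<Longrightarrow> continuous_on {-1..1} (omt_dalpha a)"
  unfolding omt_dalpha_def using one_plus_mult_pos[of a]
  by (intro continuous_intros) (auto simp: less_imp_neq[symmetric])

definition omt_moment :: "nat \<Rightarrow> real \<Rightarrow> real" where
  "omt_moment j b = integral {-1..1} (\<lambda>x. x ^ j * omt b x)"

lemma omt_moment_has_derivative:
  assumes a: "a \<in> {-1<..<1}"
  shows "(omt_moment j has_real_derivative integral {-1..1} (\<lambda>x. x ^ j * omt_dalpha a x)) (at a)"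
proof -
  let ?U = "{-1<..<1::real}"
  have nz: "\<And>b t. b \<in> ?U \<Longrightarrow> t \<in> {-1..1} \<Longrightarrow> 1 + b * t \<noteq> 0"
    using one_plus_mult_pos by (metis less_irrefl)
  have "((\<lambda>b. integral (cbox (-1) 1) (\<lambda>t. t ^ j * omt b t)) has_real_derivative
          integral (cbox (-1) 1) (\<lambda>t. t ^ j * omt_dalpha a t)) (at a within ?U)"
  proof (rule leibniz_rule_field_derivative[where fx = "\<lambda>b t. t ^ j * omt_dalpha b t"])
    fix b t assume b: "b \<in> ?U" and t: "t \<in> cbox (-1::real) 1"
    show "((\<lambda>b. t ^ j * omt b t) has_real_derivative t ^ j * omt_dalpha b t) (at b within ?U)"
      using omt_has_derivative_alpha[OF nz[OF b], where S = ?U] t by (auto intro!: derivative_eq_intros)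
  next
    fix b assume b: "b \<in> ?U"
    show "(\<lambda>t. t ^ j * omt b t) integrable_on cbox (-1) 1"
      using pos_weight_continuous_on[OF pos_weight_omt[OF b]]
      by (simp add: integrable_continuous_interval continuous_intros)
  next
    have "continuous_on (?U \<times> {-1..1}) (\<lambda>z. snd z ^ j * (-5 * snd z / (1 + fst z * snd z) ^ 6))"
      using nz by (intro continuous_intros) auto
    then show "continuous_on (?U \<times> cbox (-1) 1) (\<lambda>(b, t). t ^ j * omt_dalpha b t)"
      unfolding omt_dalpha_def by (simp add: case_prod_beta')
  qed (use a in auto)
  then show ?thesis unfolding omt_moment_def[abs_def] using at_within_open[of a ?U] a by simp
qed

lemma poly_eq_sum_coeff:
  fixes p :: "real poly"
  assumes "degree p \<le> m"
  shows "poly p x = (\<Sum>i\<le>m. coeff p i * x ^ i)"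
proof -
  have "(\<Sum>i\<le>m. coeff p i * x ^ i) = (\<Sum>i\<le>degree p. coeff p i * x ^ i)"
    using assms by (intro sum.mono_neutral_right) (auto simp: coeff_eq_0)
  then show ?thesis by (simp add: poly_altdef)
qed

lemma ipw_eq_sum_moments:
  assumes g: "continuous_on {-1..1} g" and p: "degree p \<le> dp" and q: "degree q \<le> dq"
  shows "ipw g p q = (\<Sum>i\<le>dp. \<Sum>j\<le>dq. coeff p i * coeff q j * integral {-1..1} (\<lambda>x. x ^ (i + j) * g x))"
proof -
  have integrand: "poly p x * poly q x * g x = (\<Sum>i\<le>dp. \<Sum>j\<le>dq. coeff p i * coeff q j * (x ^ (i + j) * g x))"
    for x
  proof -
    have "poly p x * poly q x * g x = (\<Sum>i\<le>dp. \<Sum>j\<le>dq. (coeff p i * x ^ i) * (coeff q j * x ^ j)) * g x"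
      unfolding poly_eq_sum_coeff[OF p] poly_eq_sum_coeff[OF q] sum_product ..
    then show ?thesis
      unfolding sum_distrib_right by (simp add: power_add algebra_simps)
  qed
  have int: "(\<lambda>x. x ^ m * g x) integrable_on {-1..1}" for m
    by (rule integrable_continuous_interval) (intro continuous_intros g)
  show ?thesis
    unfolding ipw_def integrand
    by (subst integral_sum, auto intro!: integrable_sum integrable_on_mult_right int)
       (intro sum.cong refl, subst integral_sum, auto intro!: integrable_on_mult_right int)
qed

lemma differentiable_transform_open:
  fixes f g :: "real \<Rightarrow> real"
  assumes "f differentiable (at a)" "open S" "a \<in> S" "\<And>x. x \<in> S \<Longrightarrow> f x = g x"
  shows "g differentiable (at a)"
  using assms has_derivative_transform_within_open unfolding differentiable_def by blast

lemma ipw_omt_family_differentiable: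
  assumes a: "a \<in> {-1<..<1}"
    and P: "\<And>i. (\<lambda>b. coeff (P b) i) differentiable (at a)" "\<And>b. degree (P b) \<le> dp"
    and Q: "\<And>i. (\<lambda>b. coeff (Q b) i) differentiable (at a)" "\<And>b. degree (Q b) \<le> dq"
  shows "(\<lambda>b. ipw (omt b) (P b) (Q b)) differentiable (at a)"
proof (rule differentiable_transform_open)
  show "(\<lambda>b. \<Sum>i\<le>dp. \<Sum>j\<le>dq. coeff (P b) i * coeff (Q b) j * omt_moment (i + j) b) differentiable (at a)"
    using P(1) Q(1) omt_moment_has_derivative[OF a] real_differentiable_def
    by (intro differentiable_sum ballI differentiable_mult) auto
  fix b :: real assume b: "b \<in> {-1<..<1}"
  show "(\<Sum>i\<le>dp. \<Sum>j\<le>dq. coeff (P b) i * coeff (Q b) j * omt_moment (i + j) b) = ipw (omt b) (P b) (Q b)"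
    unfolding ipw_eq_sum_moments[OF pos_weight_continuous_on[OF pos_weight_omt[OF b]] P(2) Q(2)]
      omt_moment_def ..
qed (use a in auto)

lemma coeff_ortho_poly_omt_differentiable:
  assumes a: "a \<in> {-1<..<1}"
  shows "(\<lambda>b. coeff (ortho_poly (omt b) m) i) differentiable (at a)"
proof -
  have nz: "ipw (omt a) (ortho_poly (omt a) m) (ortho_poly (omt a) m) \<noteq> 0" for m
    using ipw_self_pos[OF pos_weight_omt[OF a]] by (metis less_irrefl ortho_poly_nonzero)
  have ipw_diff: "(\<lambda>b. ipw (omt b) (P b) (Q b)) differentiable (at a)"
    if "\<And>i. (\<lambda>b. coeff (P b) i) differentiable (at a)" "\<And>i. (\<lambda>b. coeff (Q b) i) differentiable (at a)"
       "\<And>b. degree (P b) \<le> Suc m" "\<And>b. degree (Q b) \<le> Suc m" for P Q m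
    using ipw_omt_family_differentiable[OF a] that by blast
  have x_diff: "(\<lambda>b. coeff (pCons 0 (P b)) i) differentiable (at a)"
    if "\<And>i. (\<lambda>b. coeff (P b) i) differentiable (at a)" for P :: "real \<Rightarrow> real poly" and i
    using that by (cases i) auto
  \<comment> \<open>the recurrence expresses the coefficients through inner products, i.e. moments of \<open>omt b\<close>\<close>
  have "(\<forall>i. (\<lambda>b. coeff (ortho_poly (omt b) m) i) differentiable (at a)) \<and>
        (\<forall>i. (\<lambda>b. coeff (ortho_poly (omt b) (Suc m)) i) differentiable (at a))"
  proof (induction m)
    case 0
    have "(\<lambda>b. ipw (omt b) (pCons 0 1) 1) differentiable (at a)" "(\<lambda>b. ipw (omt b) 1 1) differentiable (at a)"
      by (rule ipw_diff[of _ _ 0]; simp)+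
    then have "\<And>i. (\<lambda>b. coeff (ortho_poly (omt b) (Suc 0)) i) differentiable (at a)"
      using nz[of 0] by (simp only: ortho_poly.simps coeff_diff coeff_smult)
        (intro differentiable_diff differentiable_mult differentiable_divide; simp)
    then show ?case by simp
  next
    case (Suc m)
    then have P0: "\<And>i. (\<lambda>b. coeff (ortho_poly (omt b) m) i) differentiable (at a)"
      and P1: "\<And>i. (\<lambda>b. coeff (ortho_poly (omt b) (Suc m)) i) differentiable (at a)" by blast+
    have "(\<lambda>b. ipw (omt b) (pCons 0 (ortho_poly (omt b) (Suc m))) (ortho_poly (omt b) (Suc m)))
            differentiable (at a)"
      by (rule ipw_diff[OF x_diff[OF P1] P1, of "Suc m"]) simp_all
    moreover have "(\<lambda>b. ipw (omt b) (ortho_poly (omt b) (Suc m)) (ortho_poly (omt b) (Suc m)))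
            differentiable (at a)"
      by (rule ipw_diff[OF P1 P1, of m]) simp_all
    moreover have "(\<lambda>b. ipw (omt b) (ortho_poly (omt b) m) (ortho_poly (omt b) m)) differentiable (at a)"
      by (rule ipw_diff[OF P0 P0, of m]) simp_all
    ultimately have "\<And>i. (\<lambda>b. coeff (ortho_poly (omt b) (Suc (Suc m))) i) differentiable (at a)"
      using P0 P1 x_diff[OF P1] nz[of m] nz[of "Suc m"]
      by (simp only: ortho_poly.simps coeff_diff coeff_smult)
         (intro differentiable_diff differentiable_mult differentiable_divide; simp)
    then show ?case using P1 by blast
  qed
  then show ?thesis by blast
qed

section \<open>Continuity of the zeros in \<open>\<alpha>\<close>\<close>

lemma poly_ortho_poly_omt_tendsto:
  assumes a: "a \<in> {-1<..<1}"
  shows "((\<lambda>b. poly (ortho_poly (omt b) n) x) \<longlongrightarrow> poly (ortho_poly (omt a) n) x) (at a)"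
proof -
  have "((\<lambda>b. coeff (ortho_poly (omt b) n) i) \<longlongrightarrow> coeff (ortho_poly (omt a) n) i) (at a)" for i
    using differentiable_imp_continuous_within[OF coeff_ortho_poly_omt_differentiable[OF a]]
    by (simp add: isCont_def)
  moreover have "poly (ortho_poly w n) x = (\<Sum>i\<le>n. coeff (ortho_poly w n) i * x ^ i)" for w
    by (rule poly_eq_sum_coeff) simp
  ultimately show ?thesis by (auto intro!: tendsto_intros)
qed

lemma strict_mono_on_separation:
  fixes y :: "nat \<Rightarrow> real"
  assumes y: "strict_mono_on {..<n} y" and \<epsilon>: "\<epsilon> > 0"
  obtains e where "0 < e" "e < \<epsilon>" "\<And>i j. i < j \<Longrightarrow> j < n \<Longrightarrow> y i + 3 * e \<le> y j"
proof -
  define D where "D = insert \<epsilon> ((\<lambda>j. y (Suc j) - y j) ` {j. Suc j < n})"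
  have "finite {j. Suc j < n}" by (rule finite_subset[of _ "{..<n}"]) auto
  then have "finite D" unfolding D_def by simp
  have "Min D > 0"
    using Min_in[OF \<open>finite D\<close>] \<epsilon> strict_mono_onD[OF y] unfolding D_def by fastforce
  moreover have "Min D \<le> \<epsilon>" using \<open>finite D\<close> unfolding D_def by (intro Min_le) auto
  ultimately have "Min D / 3 > 0" "Min D / 3 < \<epsilon>" by simp_all
  moreover have "y i + 3 * (Min D / 3) \<le> y j" if "i < j" "j < n" for i j
  proof -
    have "y (Suc i) \<le> y j"
      using strict_mono_onD[OF y, of "Suc i" j] that by (cases "Suc i = j") auto
    moreover have "Min D \<le> y (Suc i) - y i"
      using \<open>finite D\<close> that unfolding D_def by (intro Min_le) auto
    ultimately show ?thesis by simp
  qed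
  ultimately show ?thesis using that by blast
qed

lemma root_poly_sign_change:
  assumes R: "finite R" "r \<in> R" and e: "0 < e" and isolated: "\<And>s. s \<in> R \<Longrightarrow> s \<noteq> r \<Longrightarrow> e < \<bar>s - r\<bar>"
  shows "poly (root_poly R) (r - e) * poly (root_poly R) (r + e) < 0"
proof -
  define h where "h = root_poly (R - {r})"
  have h_nz: "poly h x \<noteq> 0" if "\<bar>x - r\<bar> \<le> e" for x
    using that isolated poly_root_poly_remove_eq_0_iff[OF R(1)] unfolding h_def by force
  have "poly h (r - e) * poly h (r + e) > 0"
  proof (rule ccontr)
    assume "\<not> ?thesis"
    then have "poly h (r - e) * poly h (r + e) < 0" using h_nz e by (simp add: not_less le_less)
    then obtain x where "r - e < x" "x < r + e" "poly h x = 0" using poly_IVT[of "r - e" "r + e" h] e by auto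
    then show False using h_nz[of x] by simp
  qed
  moreover have "poly (root_poly R) (r - e) * poly (root_poly R) (r + e)
      = - (e * e) * (poly h (r - e) * poly h (r + e))"
    unfolding h_def root_poly_remove[OF R] by (simp add: algebra_simps)
  ultimately show ?thesis using e by (simp add: mult_neg_pos)
qed

lemma sorted_roots_near_sign_changes:
  fixes y :: "nat \<Rightarrow> real"
  assumes e: "0 < e" and sep: "\<And>i j. i < j \<Longrightarrow> j < n \<Longrightarrow> y i + 3 * e \<le> y j"
    and sign: "\<And>j. j < n \<Longrightarrow> poly (ortho_poly w n) (y j - e) * poly (ortho_poly w n) (y j + e) < 0"
  obtains z where "sorted_roots w n z" "\<And>k. k < n \<Longrightarrow> \<bar>z k - y k\<bar> < e"
proof -
  have "\<forall>j\<in>{..<n}. \<exists>r. y j - e < r \<and> r < y j + e \<and> poly (ortho_poly w n) r = 0"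
    using sign poly_IVT[of "y _ - e" "y _ + e"] e by auto
  then obtain z where "\<forall>j\<in>{..<n}. y j - e < z j \<and> z j < y j + e \<and> poly (ortho_poly w n) (z j) = 0"
    by (metis bchoice)
  then have z: "\<And>j. j < n \<Longrightarrow> y j - e < z j \<and> z j < y j + e \<and> poly (ortho_poly w n) (z j) = 0"
    by simp
  have "strict_mono_on {..<n} z"
  proof (rule strict_mono_onI)
    fix i j assume "i \<in> {..<n}" "j \<in> {..<n}" "i < j"
    then show "z i < z j" using z[of i] z[of j] sep[of i j] e by auto
  qed
  then have "sorted_roots w n z" using z by (intro sorted_rootsI) auto
  moreover have "\<bar>z k - y k\<bar> < e" if "k < n" for k using z[OF that] by auto
  ultimately show ?thesis using that by blast
qed

lemma eventually_sorted_roots_near: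
  assumes a: "a \<in> {-1<..<1}" and y: "sorted_roots (omt a) n y" and \<epsilon>: "\<epsilon> > 0"
  shows "eventually (\<lambda>b. \<exists>z. sorted_roots (omt b) n z \<and> (\<forall>k<n. \<bar>z k - y k\<bar> < \<epsilon>)) (at a)"
proof -
  have y_mono: "strict_mono_on {..<n} y" using y sorted_roots_def by auto
  obtain e where e: "0 < e" "e < \<epsilon>" and sep: "\<And>i j. i < j \<Longrightarrow> j < n \<Longrightarrow> y i + 3 * e \<le> y j"
    using strict_mono_on_separation[OF y_mono \<epsilon>] by blast
  define sign_change where
    "sign_change b j \<longleftrightarrow> poly (ortho_poly (omt b) n) (y j - e) * poly (ortho_poly (omt b) n) (y j + e) < 0"
    for b j
  have sign_a: "sign_change a j" if j: "j < n" for j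
  proof -
    have "e < \<bar>s - y j\<bar>" if s: "s \<in> y ` {..<n}" "s \<noteq> y j" for s
    proof -
      obtain i where i: "i < n" "s = y i" "i \<noteq> j" using s by auto
      then consider "i < j" | "j < i" by linarith
      then show ?thesis using sep[of i j] sep[of j i] i j e by cases auto
    qed
    then show ?thesis
      unfolding sign_change_def sorted_roots_eq_root_poly[OF y] using j e
      by (intro root_poly_sign_change) auto
  qed
  \<comment> \<open>finitely many strict sign conditions persist for \<open>b\<close> near \<open>a\<close>\<close>
  have "eventually (\<lambda>b. sign_change b j) (at a)" if "j < n" for j
  proof -
    have "((\<lambda>b. poly (ortho_poly (omt b) n) (y j - e) * poly (ortho_poly (omt b) n) (y j + e))
        \<longlongrightarrow> poly (ortho_poly (omt a) n) (y j - e) * poly (ortho_poly (omt a) n) (y j + e)) (at a)"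
      by (intro tendsto_mult poly_ortho_poly_omt_tendsto[OF a])
    then show ?thesis using sign_a[OF that] unfolding sign_change_def by (rule order_tendstoD(2))
  qed
  then have "eventually (\<lambda>b. \<forall>j\<in>{..<n}. sign_change b j) (at a)"
    by (intro eventually_ball_finite) auto
  then show ?thesis
  proof (rule eventually_mono)
    fix b assume "\<forall>j\<in>{..<n}. sign_change b j"
    then have signs: "\<And>j. j < n \<Longrightarrow>
        poly (ortho_poly (omt b) n) (y j - e) * poly (ortho_poly (omt b) n) (y j + e) < 0"
      unfolding sign_change_def by simp
    obtain z where z: "sorted_roots (omt b) n z" "\<And>k. k < n \<Longrightarrow> \<bar>z k - y k\<bar> < e"
      using sorted_roots_near_sign_changes[where y = y, OF e(1) sep signs] by metis
    have "\<forall>k<n. \<bar>z k - y k\<bar> < \<epsilon>" using z(2) e(2) by (meson less_trans)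
    with z(1) show "\<exists>z. sorted_roots (omt b) n z \<and> (\<forall>k<n. \<bar>z k - y k\<bar> < \<epsilon>)" by blast
  qed
qed

lemma eventually_lam_near:
  assumes a: "a \<in> {-1<..<1}" and y: "sorted_roots (omt a) n y" and k: "k < n" and \<epsilon>: "\<epsilon> > 0"
  shows "eventually (\<lambda>b. poly (ortho_poly (omt b) n) (lam b n k) = 0 \<and> \<bar>lam b n k - y k\<bar> < \<epsilon>) (at a)"
  using eventually_conj[OF eventually_sorted_roots_near[OF a y \<epsilon>] eventually_at_in_open'[OF _ a]]
proof (rule eventually_mono)
  fix b assume "(\<exists>z. sorted_roots (omt b) n z \<and> (\<forall>k<n. \<bar>z k - y k\<bar> < \<epsilon>)) \<and> b \<in> {-1<..<1}"
  then obtain z where b: "b \<in> {-1<..<1}" and z: "sorted_roots (omt b) n z" "\<forall>k<n. \<bar>z k - y k\<bar> < \<epsilon>"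
    by blast
  show "poly (ortho_poly (omt b) n) (lam b n k) = 0 \<and> \<bar>lam b n k - y k\<bar> < \<epsilon>"
    using lam_sorted_roots[OF b z(1) k] sorted_roots_root[OF z(1) k] z(2) k by simp
qed simp

section \<open>The derivative of a zero and its sign\<close>

lemma poly_family_root_has_derivative:
  fixes P :: "real \<Rightarrow> real poly" and L :: "real \<Rightarrow> real"
  assumes deg: "\<And>b. degree (P b) \<le> n"
    and coeff_deriv: "\<And>i. ((\<lambda>b. coeff (P b) i) has_real_derivative d i) (at a)"
    and factor: "\<And>x. poly (P a) x = (x - x0) * poly h x" and h: "poly h x0 \<noteq> 0"
    and L_lim: "(L \<longlongrightarrow> x0) (at a)" and L_a: "L a = x0"
    and L_root: "eventually (\<lambda>b. poly (P b) (L b) = 0) (at a)"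
  shows "(L has_real_derivative - (\<Sum>i\<le>n. d i * x0 ^ i) / poly h x0) (at a)"
proof -
  define c where "c i b = coeff (P b) i" for i b
  have poly_P: "poly (P b) x = (\<Sum>i\<le>n. c i b * x ^ i)" for b x
    unfolding c_def by (rule poly_eq_sum_coeff[OF deg])
  have h_lim: "((\<lambda>b. poly h (L b)) \<longlongrightarrow> poly h x0) (at a)"
    by (rule isCont_tendsto_compose[OF poly_isCont L_lim])
  have lim: "((\<lambda>b. - (\<Sum>i\<le>n. (c i b - c i a) / (b - a) * L b ^ i) / poly h (L b)) \<longlongrightarrow>
             - (\<Sum>i\<le>n. d i * x0 ^ i) / poly h x0) (at a)"
    using coeff_deriv unfolding has_field_derivative_iff c_def
    by (intro tendsto_intros L_lim h_lim h)
  \<comment> \<open>\<open>P b (L b) = 0\<close> and \<open>P a (L b) = (L b - L a) h (L b)\<close>, so the difference quotient of \<open>L\<close>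
      is minus that of the coefficients, evaluated at \<open>L b\<close> and divided by \<open>h (L b)\<close>\<close>
  have eq: "eventually (\<lambda>b. (L b - L a) / (b - a) =
          - (\<Sum>i\<le>n. (c i b - c i a) / (b - a) * L b ^ i) / poly h (L b)) (at a)"
    using eventually_conj[OF eventually_conj[OF L_root tendsto_imp_eventually_ne[OF h_lim h]]
        eventually_neq_at_within[of a a UNIV]]
  proof (rule eventually_mono)
    fix b assume b: "(poly (P b) (L b) = 0 \<and> poly h (L b) \<noteq> 0) \<and> b \<noteq> a"
    have "(\<Sum>i\<le>n. (c i b - c i a) / (b - a) * L b ^ i)
        = ((\<Sum>i\<le>n. c i b * L b ^ i) - (\<Sum>i\<le>n. c i a * L b ^ i)) / (b - a)"
      by (simp add: sum_divide_distrib sum_subtractf[symmetric] algebra_simps)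
    also have "\<dots> = - ((L b - x0) * poly h (L b)) / (b - a)"
      using b unfolding poly_P[symmetric] factor by simp
    finally show "(L b - L a) / (b - a) = - (\<Sum>i\<le>n. (c i b - c i a) / (b - a) * L b ^ i) / poly h (L b)"
      using b L_a by (simp add: field_simps)
  qed
  show ?thesis unfolding has_field_derivative_iff using tendsto_cong[OF eq] lim by simp
qed

lemma coeff_ortho_poly_omt_has_derivative:
  assumes "a \<in> {-1<..<1}"
  shows "((\<lambda>b. coeff (ortho_poly (omt b) n) i) has_real_derivative
           deriv (\<lambda>b. coeff (ortho_poly (omt b) n) i) a) (at a)"
  using coeff_ortho_poly_omt_differentiable[OF assms] DERIV_deriv_iff_real_differentiable by blast

definition ortho_poly_deriv :: "real \<Rightarrow> nat \<Rightarrow> real poly" where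
  "ortho_poly_deriv a n = (\<Sum>i\<le>n. monom (deriv (\<lambda>b. coeff (ortho_poly (omt b) n) i) a) i)"

lemma coeff_ortho_poly_deriv:
  "coeff (ortho_poly_deriv a n) j = (if j \<le> n then deriv (\<lambda>b. coeff (ortho_poly (omt b) n) j) a else 0)"
  unfolding ortho_poly_deriv_def by (simp add: coeff_sum coeff_monom)

lemma poly_ortho_poly_deriv:
  "poly (ortho_poly_deriv a n) x = (\<Sum>i\<le>n. deriv (\<lambda>b. coeff (ortho_poly (omt b) n) i) a * x ^ i)"
  unfolding ortho_poly_deriv_def by (simp add: poly_sum poly_monom)

lemma degree_ortho_poly_deriv: "degree (ortho_poly_deriv a n) \<le> n"
  by (rule degree_le) (simp add: coeff_ortho_poly_deriv)

lemma deg_below_ortho_poly_deriv: "deg_below (ortho_poly_deriv a n) n"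
proof -
  \<comment> \<open>the leading coefficient is constantly 1\<close>
  have "deriv (\<lambda>b. coeff (ortho_poly (omt b) n) n) a = 0" by simp
  then show ?thesis unfolding deg_below_def coeff_ortho_poly_deriv by auto
qed

lemma lam_has_derivative:
  assumes a: "a \<in> {-1<..<1}" and y: "sorted_roots (omt a) n y" and k: "k < n"
  shows "((\<lambda>b. lam b n k) has_real_derivative
           - poly (ortho_poly_deriv a n) (y k) / poly (root_poly (y ` {..<n} - {y k})) (y k)) (at a)"
proof -
  define R where "R = y ` {..<n}"
  have R: "finite R" "y k \<in> R" unfolding R_def using k by auto
  have lim: "(\<lambda>b. lam b n k) \<midarrow>a\<rightarrow> y k"
  proof (rule tendstoI)
    fix \<epsilon> :: real assume "\<epsilon> > 0"
    from eventually_lam_near[OF a y k this] show "eventually (\<lambda>b. dist (lam b n k) (y k) < \<epsilon>) (at a)"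
      by (rule eventually_mono) (simp add: dist_real_def)
  qed
  have factor: "poly (ortho_poly (omt a) n) x = (x - y k) * poly (root_poly (R - {y k})) x" for x
    unfolding sorted_roots_eq_root_poly[OF y] R_def[symmetric] root_poly_remove[OF R]
    by (simp add: algebra_simps)
  have h: "poly (root_poly (R - {y k})) (y k) \<noteq> 0" using poly_root_poly_remove_eq_0_iff[OF R(1)] by simp
  have root: "eventually (\<lambda>b. poly (ortho_poly (omt b) n) (lam b n k) = 0) (at a)"
    using eventually_lam_near[OF a y k zero_less_one] by (rule eventually_mono) simp
  have "((\<lambda>b. lam b n k) has_real_derivative
      - (\<Sum>i\<le>n. deriv (\<lambda>b. coeff (ortho_poly (omt b) n) i) a * y k ^ i) / poly (root_poly (R - {y k})) (y k))
      (at a)"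
    by (rule poly_family_root_has_derivative[OF _ coeff_ortho_poly_omt_has_derivative[OF a] factor h lim
          lam_sorted_roots[OF a y k] root]) simp
  then show ?thesis unfolding poly_ortho_poly_deriv R_def .
qed

lemma omt_dalpha_decompose:
  fixes a x x0 :: real
  assumes u: "1 + a * x \<noteq> 0" and v: "1 + a * x0 \<noteq> 0"
  shows "omt_dalpha a x
       = (- 5 * x0 / (1 + a * x0)) * omt a x + (- 5 / (1 + a * x0)) * ((x - x0) * (1 / (1 + a * x) ^ 6))"
proof -
  define u where "u = 1 + a * x"
  define v where "v = 1 + a * x0"
  have "(- 5 * x0 / v) * (1 / u ^ 5) + (- 5 / v) * ((x - x0) * (1 / u ^ 6))
      = (- 5 / (v * u ^ 6)) * (x0 * u + (x - x0))"
    using u v unfolding u_def[symmetric] v_def[symmetric] by (simp add: field_simps eval_nat_numeral)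
  also have "x0 * u + (x - x0) = x * v" unfolding u_def v_def by (simp add: algebra_simps)
  also have "(- 5 / (v * u ^ 6)) * (x * v) = - 5 * x / u ^ 6"
    using v unfolding v_def[symmetric] by (simp add: field_simps)
  finally show ?thesis unfolding omt_dalpha_def omt_def u_def v_def by simp
qed

lemma ipw_omt_dalpha_neg:
  assumes a: "a \<in> {-1<..<1}" and x0: "-1 < x0" "x0 < 1" and P: "P \<noteq> 0"
    and factor: "\<And>x. poly P x = (x - x0) * poly h x" and orth: "ipw (omt a) P h = 0"
  shows "ipw (omt_dalpha a) P h < 0"
proof -
  define \<kappa> where "\<kappa> = - 5 * x0 / (1 + a * x0)"
  define \<mu> where "\<mu> = - 5 / (1 + a * x0)"
  define w6 where "w6 x = 1 / (1 + a * x) ^ 6" for x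
  have ax0: "1 + a * x0 > 0" using one_plus_mult_pos[OF a, of x0] x0 by auto
  have w6: "pos_weight w6" unfolding w6_def by (rule pos_weight_inverse_power[OF a])
  \<comment> \<open>\<open>(x - x0) P h = P\<^sup>2\<close>, so the second part of the decomposed weight contributes \<open>\<mu> \<integral> P\<^sup>2 w6\<close>\<close>
  have pointwise: "poly P x * poly h x * omt_dalpha a x
      = \<kappa> * (poly P x * poly h x * omt a x) + \<mu> * (poly (P * P) x * w6 x)" if "x \<in> {-1..1}" for x
  proof -
    have dalpha: "omt_dalpha a x = \<kappa> * omt a x + \<mu> * ((x - x0) * w6 x)"
      unfolding \<kappa>_def \<mu>_def w6_def
      using omt_dalpha_decompose[of a x x0] one_plus_mult_pos[OF a that] ax0 by simp
    show ?thesis unfolding dalpha poly_mult factor by (simp add: algebra_simps)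
  qed
  have "ipw (omt_dalpha a) P h
      = integral {-1..1} (\<lambda>x. \<kappa> * (poly P x * poly h x * omt a x) + \<mu> * (poly (P * P) x * w6 x))"
    unfolding ipw_def by (rule integral_cong) (rule pointwise)
  also have "\<dots> = \<kappa> * ipw (omt a) P h + \<mu> * integral {-1..1} (\<lambda>x. poly (P * P) x * w6 x)"
    using pos_weight_continuous_on[OF pos_weight_omt[OF a]] pos_weight_continuous_on[OF w6]
    unfolding ipw_def
    by (subst integral_add) (auto intro!: integrable_continuous_interval continuous_intros)
  also have "\<dots> < 0"
  proof -
    have "\<mu> < 0" unfolding \<mu>_def using ax0 by simp
    moreover have "integral {-1..1} (\<lambda>x. poly (P * P) x * w6 x) > 0"
      using P by (intro integral_poly_weight_pos[OF w6]) auto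
    ultimately show ?thesis using orth by (simp add: mult_neg_pos)
  qed
  finally show ?thesis .
qed

lemma ipw_ortho_poly_deriv:
  assumes a: "a \<in> {-1<..<1}" and q: "deg_below q n"
  shows "ipw (omt a) (ortho_poly_deriv a n) q = - ipw (omt_dalpha a) (ortho_poly (omt a) n) q"
proof -
  define c where "c i b = coeff (ortho_poly (omt b) n) i" for i b
  define d where "d i = deriv (\<lambda>b. coeff (ortho_poly (omt b) n) i) a" for i
  define dm where "dm m = integral {-1..1} (\<lambda>x. x ^ m * omt_dalpha a x)" for m
  have dq: "degree q \<le> n" using q deg_below_iff by auto
  \<comment> \<open>\<open>G b = \<langle>\<tilde>\<phi>\<^sub>n(b), q\<rangle>\<^sub>b\<close> vanishes identically, so its derivative \<open>V\<close> at \<open>a\<close> is 0\<close>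
  define G where "G b = (\<Sum>i\<le>n. \<Sum>j\<le>n. c i b * (coeff q j * omt_moment (i + j) b))" for b
  define V where "V = (\<Sum>i\<le>n. \<Sum>j\<le>n. c i a * (coeff q j * dm (i + j)) + d i * (coeff q j * omt_moment (i + j) a))"
  have "(G has_real_derivative V) (at a)"
    unfolding G_def V_def c_def d_def dm_def
    by (intro DERIV_sum DERIV_mult' DERIV_cmult coeff_ortho_poly_omt_has_derivative[OF a]
        omt_moment_has_derivative[OF a])
  moreover have "G b = 0" if b: "b \<in> {-1<..<1}" for b
  proof -
    have "ipw (omt b) (ortho_poly (omt b) n) q = (\<Sum>i\<le>n. \<Sum>j\<le>n. coeff (ortho_poly (omt b) n) i * coeff q j
        * integral {-1..1} (\<lambda>x. x ^ (i + j) * omt b x))"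
      by (rule ipw_eq_sum_moments[OF pos_weight_continuous_on[OF pos_weight_omt[OF b]] _ dq]) simp
    also have "\<dots> = G b" unfolding G_def c_def omt_moment_def by (simp add: mult.assoc)
    finally show ?thesis using ortho_poly_orthogonal[OF pos_weight_omt[OF b] q] by simp
  qed
  then have "(G has_real_derivative 0) (at a)"
    by (intro has_field_derivative_transform_within_open[OF DERIV_const _ a]) auto
  ultimately have "V = 0" by (rule DERIV_unique)
  have "ipw (omt a) (ortho_poly_deriv a n) q = (\<Sum>i\<le>n. \<Sum>j\<le>n. d i * (coeff q j * omt_moment (i + j) a))"
    unfolding ipw_eq_sum_moments[OF pos_weight_continuous_on[OF pos_weight_omt[OF a]] degree_ortho_poly_deriv dq]
      omt_moment_def d_def
    by (intro sum.cong refl) (simp add: coeff_ortho_poly_deriv)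
  moreover have "ipw (omt_dalpha a) (ortho_poly (omt a) n) q = (\<Sum>i\<le>n. \<Sum>j\<le>n. c i a * (coeff q j * dm (i + j)))"
    by (subst ipw_eq_sum_moments[OF continuous_on_omt_dalpha[OF a] _ dq, of _ n])
      (simp_all add: dm_def c_def mult.assoc)
  ultimately show ?thesis using \<open>V = 0\<close> unfolding V_def
    by (simp add: sum.distrib eq_neg_iff_add_eq_0 add.commute)
qed

lemma lam_derivative_neg:
  assumes a: "a \<in> {-1<..<1}" and y: "sorted_roots (omt a) n y" and k: "k < n"
  shows "- poly (ortho_poly_deriv a n) (y k) / poly (root_poly (y ` {..<n} - {y k})) (y k) < 0"
proof -
  define x0 where "x0 = y k"
  define R where "R = y ` {..<n}"
  define h where "h = root_poly (R - {x0})"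
  define W where "W = gauss_weight (omt a) R x0"
  define D where "D = ortho_poly_deriv a n"
  have w: "pos_weight (omt a)" by (rule pos_weight_omt[OF a])
  have R: "finite R" "card R = n" "x0 \<in> R" unfolding R_def x0_def using card_sorted_roots[OF y] k by auto
  have h_x0: "poly h x0 \<noteq> 0" unfolding h_def using poly_root_poly_remove_eq_0_iff[OF R(1)] by simp
  have h_R: "poly h r = 0" if "r \<in> R" "r \<noteq> x0" for r
    unfolding h_def using poly_root_poly_remove_eq_0_iff[OF R(1)] that by simp
  have h: "deg_below h n" unfolding h_def using deg_below_root_poly_remove[OF R(1,3)] R(2) by simp
  have factor: "poly (ortho_poly (omt a) n) x = (x - x0) * poly h x" for x
    unfolding sorted_roots_eq_root_poly[OF y] R_def[symmetric] h_def root_poly_remove[OF R(1,3)]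
    by (simp add: algebra_simps)
  have x0: "-1 < x0" "x0 < 1"
    using ortho_poly_root_in_interval[OF w sorted_roots_root[OF y k]] unfolding x0_def by auto
  have neg: "ipw (omt_dalpha a) (ortho_poly (omt a) n) h < 0"
    using ipw_omt_dalpha_neg[OF a x0 ortho_poly_nonzero factor ortho_poly_orthogonal[OF w h]] .
  obtain m where m: "n = Suc m" using k by (cases n) auto
  have "deg_below (D * h) (2 * n)"
    using deg_below_mult[of D m h m] deg_below_ortho_poly_deriv[of a n] h m unfolding D_def
    by (auto intro: deg_below_mono)
  \<comment> \<open>quadrature for \<open>D h\<close>: only the node \<open>x0\<close> survives since \<open>h\<close> vanishes at the others\<close>
  then have "ipw (omt a) (D * h) 1 = (\<Sum>r\<in>R. poly (D * h) r * gauss_weight (omt a) R r)"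
    unfolding R_def by (rule gauss_quadrature[OF w y])
  also have "\<dots> = poly (D * h) x0 * W"
    unfolding W_def using h_R by (subst sum.remove[OF R(1,3)]) (auto intro!: sum.neutral)
  finally have "poly D x0 * poly h x0 * W = - ipw (omt_dalpha a) (ortho_poly (omt a) n) h"
    using ipw_ortho_poly_deriv[OF a h] ipw_mult_shift[of "omt a" D h 1] unfolding D_def by simp
  then have "poly D x0 * poly h x0 * W > 0" using neg by simp
  moreover have "W > 0" unfolding W_def R_def using gauss_weight_pos[OF w y] R(3) R_def by simp
  ultimately have "poly D x0 * poly h x0 > 0" by (simp add: zero_less_mult_iff)
  then have "poly D x0 / poly h x0 > 0" by (auto simp: zero_less_mult_iff zero_less_divide_iff)
  then show ?thesis unfolding D_def x0_def h_def R_def by simp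
qed

theorem mainTheorem6:
  fixes N :: nat
  assumes "N \<ge> 1"
  shows "(\<forall>k\<le>N. \<forall>a\<in>{-1<..<1::real}.
            \<exists>d. ((\<lambda>b. lam b (N+1) k) has_real_derivative d) (at a) \<and> d < 0)
       \<and> (\<forall>a\<in>{-1<..<1::real}. \<forall>k<N.
            lam a (N+1) k < lam a N k \<and> lam a N k < lam a (N+1) (k+1))
       \<and> (\<forall>a\<in>{-1<..<1::real}.
            lam a (N+1) 0 < integral {-1..1} (\<lambda>\<mu>. \<mu> * om a \<mu>) / integral {-1..1} (om a)
          \<and> integral {-1..1} (\<lambda>\<mu>. \<mu> * om a \<mu>) / integral {-1..1} (om a) < lam a (N+1) N
          \<and> (\<forall>f. f 0 \<noteq> 0 \<and> f 1 = 0 \<longrightarrow>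
                lam a (N+1) 0 < moment a N f 1 / moment a N f 0
              \<and> moment a N f 1 / moment a N f 0 < lam a (N+1) N))"
proof (intro conjI allI ballI impI)
  fix k a assume k: "k \<le> N" and a: "a \<in> {-1<..<1::real}"
  obtain xs ys where ys: "sorted_roots (omt a) (Suc N) ys"
    using ortho_poly_sorted_roots[OF pos_weight_omt[OF a], of N] by blast
  have k': "k < Suc N" using k by simp
  show "\<exists>d. ((\<lambda>b. lam b (N+1) k) has_real_derivative d) (at a) \<and> d < 0"
    using lam_has_derivative[OF a ys k'] lam_derivative_neg[OF a ys k'] by auto
next
  fix a k assume "a \<in> {-1<..<1::real}" "k < N"
  then show "lam a (N+1) k < lam a N k" "lam a N k < lam a (N+1) (k+1)"
    using lam_interlace by simp_all
next
  fix a :: real and f :: "nat \<Rightarrow> real" assume a: "a \<in> {-1<..<1}"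
  show "lam a (N+1) 0 < integral {-1..1} (\<lambda>\<mu>. \<mu> * om a \<mu>) / integral {-1..1} (om a)"
    "integral {-1..1} (\<lambda>\<mu>. \<mu> * om a \<mu>) / integral {-1..1} (om a) < lam a (N+1) N"
    using lam_bounds_weighted_mean[OF a assms] by simp_all
  assume "f 0 \<noteq> 0 \<and> f 1 = 0"
  then show "lam a (N+1) 0 < moment a N f 1 / moment a N f 0"
    "moment a N f 1 / moment a N f 0 < lam a (N+1) N"
    using lam_bounds_weighted_mean[OF a assms] moment_ratio_eq_weighted_mean[OF a] by simp_all
qed

end
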